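(* Let $\tau$ be a 2-BKP tau function with wave functions $\psi_1,\psi_2$. Then for $a,b\in\{1,2\}$, $$\frac{X_{ab}(\lambda,\mu)\tau(\mathbf t)}{\tau(\mathbf t)}=(-1)^a\,\Omega\big(\psi_b(\mathbf t,-\lambda),\psi_a(\mathbf t,\mu)\big).$$
   Context: Times: $\mathbf t=(t^{(1)},t^{(2)})$, $t^{(a)}=(t^{(a)}_1,t^{(a)}_3,\dots)$ (odd indices), $x_a=t^{(a)}_1$, $\partial_a=\partial/\partial x_a$, $\partial_{a,n}=\partial/\partial t^{(a)}_n$. $\xi(t^{(a)},z)=\sum_{i\ge1}t^{(a)}_{2i-1}z^{2i-1}$, $\tilde\partial_{t^{(a)}}=(\partial_{a,1},\frac13\partial_{a,3},\frac15\partial_{a,5},\dots)$, $[z^{-1}]=(z^{-1},z^{-3}/3,\dots)$, $[z^{-1}]_1=([z^{-1}],0)$, $[z^{-1}]_2=(0,[z^{-1}])$, $\mathrm{Res}_z\sum b_iz^i=b_{-1}$. A 2-BKP tau function satisfies for all $\mathbf t,\mathbf t'$: $\mathrm{Res}_z z^{-1}\tau(\mathbf t-2[z^{-1}]_1)\tau(\mathbf t'+2[z^{-1}]_1)e^{\xi(t^{(1)}-t'^{(1)},z)}=\mathrm{Res}_z z^{-1}\tau(\mathbf t-2[z^{-1}]_2)\tau(\mathbf t'+2[z^{-1}]_2)e^{\xi(t^{(2)}-t'^{(2)},z)}$. Wave functions $\psi_a(\mathbf t,z)=\frac{\tau(\mathbf t-2[z^{-1}]_a)}{\tau(\mathbf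 t)}e^{\xi(t^{(a)},z)}=W_a(e^{\xi(t^{(a)},z)})$ with dressing operator $W_a=\sum_{j\ge0}\frac{h_j(-2\tilde\partial_{t^{(a)}})\tau}{\tau}\partial_a^{-j}$, $e^{\xi(\mathbf y,\lambda)}=\sum h_j(\mathbf y)\lambda^j$. Vertex operators: $X_a(\lambda)=e^{\xi(t^{(a)},\lambda)}e^{-2\xi(\tilde\partial_{t^{(a)}},\lambda^{-1})}$ and $X_{ab}(\lambda,\mu)=X_a(\mu)X_b(-\lambda)=\varepsilon_{ab}(\lambda,\mu)e^{\xi(t^{(a)},\mu)-\xi(t^{(b)},\lambda)}e^{-2\xi(\tilde\partial_{t^{(a)}},\mu^{-1})+2\xi(\tilde\partial_{t^{(b)}},\lambda^{-1})}$, with $\varepsilon_{ab}=\frac{\mu+\lambda}{\mu-\lambda}$ if $a=b$ and $\varepsilon_{ab}=1$ if $a\ne b$. The function $\psi_b(\mathbf t,-\lambda)$ is a 2-BKP eigenfunction. For an eigenfunction $q$, the potential with a wave function is fixed as the formal series $\Omega(q(\mathbf t),\psi_a(\mathbf t,\mu)):=\big((-1)^a(q-2\partial_a^{-1}q_{x_a})W_a\big)(e^{\xi(t^{(a)},\mu)})$, where $\partial_a^{-k}(e^{\xi(t^{(a)},\mu)})=\mu^{-k}e^{\xi(t^{(a)},\mu)}$; it satisfies $\partial_1\Omega=\psi_aq_{x_1}-q\psi_{a,x_1}$ and $\partial_2\Omega=-(\psi_aq_{x_2}-q\psi_{a,x_2})$. *)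

theory Defs
  imports "HOL-Analysis.Analysis"
begin

text \<open>A point of time space is a pair (t1, t2) of sequences; the entry k of component a
  stands for the odd time t^(a)_(2k+1).  In particular x_a = t^(a)_1 is entry 0.\<close>

type_synonym tm = "(nat \<Rightarrow> complex) \<times> (nat \<Rightarrow> complex)"
type_synonym fn = "tm \<Rightarrow> complex"

definition tc :: "nat \<Rightarrow> tm \<Rightarrow> nat \<Rightarrow> complex" where
  "tc a t = (if a = 1 then fst t else snd t)"

definition upd :: "nat \<Rightarrow> nat \<Rightarrow> complex \<Rightarrow> tm \<Rightarrow> tm" where
  "upd a k s t = (if a = 1 then ((fst t)(k := s), snd t) else (fst t, (snd t)(k := s)))"

definition pd :: "nat \<Rightarrow> nat \<Rightarrow> fn \<Rightarrow> fn" where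
  "pd a k f t = deriv (\<lambda>s. f (upd a k s t)) (tc a t k)"

definition pds :: "(nat \<times> nat) list \<Rightarrow> fn \<Rightarrow> fn" where
  "pds ds f = foldr (\<lambda>(a,k) g. pd a k g) ds f"

definition wt :: "(nat \<times> nat) list \<Rightarrow> nat" where
  "wt ds = sum_list (map (\<lambda>(a,k). 2*k+1) ds)"

text \<open>Regularity implicit in the paper: all iterated partial derivatives exist and commute.\<close>
definition smooth_tau :: "fn \<Rightarrow> bool" where
  "smooth_tau f \<longleftrightarrow>
     (\<forall>ds a k t. (\<lambda>s. pds ds f (upd a k s t)) field_differentiable (at (tc a t k))) \<and>
     (\<forall>ds a k b l. pd a k (pd b l (pds ds f)) = pd b l (pd a k (pds ds f)))"

text \<open>hpoly y j = h_j(y) for y = (y_1, y_3, y_5, ...), entry i standing for y_(2i+1);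
  defined through  j h_j = sum_(k odd <= j) k y_k h_(j-k), i.e. exp(xi(y,z)) = sum_j h_j(y) z^j.\<close>
function hpoly :: "(nat \<Rightarrow> complex) \<Rightarrow> nat \<Rightarrow> complex" where
  "hpoly y j = (if j = 0 then 1 else
     (1 / of_nat j) * (\<Sum>i<(j+1) div 2. of_nat (2*i+1) * y i * hpoly y (j - (2*i+1))))"
  by pat_completeness auto
termination by (relation "Wellfounded.measure (\<lambda>(y,j). j)") auto

text \<open>shiftc a c j f = h_j(c * tilde-partial_(t^(a))) f, so that formally
  f(t + c[z^(-1)]_a) = sum_j shiftc a c j f (t) z^(-j).\<close>
function shiftc :: "nat \<Rightarrow> complex \<Rightarrow> nat \<Rightarrow> fn \<Rightarrow> fn" where
  "shiftc a c j f = (if j = 0 then f else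
     (\<lambda>t. (1 / of_nat j) * (\<Sum>i<(j+1) div 2. c * pd a i (shiftc a c (j - (2*i+1)) f) t)))"
  by pat_completeness auto
termination by (relation "Wellfounded.measure (\<lambda>(a,c,j,f). j)") auto

text \<open>Residue of the a-th side of the bilinear identity, truncated at order N in z:
  Res_z z^(-1) tau(t - 2[z^-1]_a) tau(t' + 2[z^-1]_a) exp(xi(t^(a) - t'^(a), z)).\<close>
definition hir :: "fn \<Rightarrow> nat \<Rightarrow> nat \<Rightarrow> tm \<Rightarrow> tm \<Rightarrow> complex" where
  "hir \<tau> a N t t' = (\<Sum>kk\<le>N. \<Sum>i\<le>kk.
      shiftc a (-2) i \<tau> t * shiftc a 2 (kk - i) \<tau> t' * hpoly (\<lambda>l. tc a t l - tc a t' l) kk)"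

text \<open>The bilinear identity for all t, t', understood as an identity of formal Taylor
  expansions in t' around t: every t'-derivative at t' = t agrees.  For a derivative of
  weight w only the terms of z-order <= w contribute, so the truncation at w is exact.\<close>
definition bkp2_tau :: "fn \<Rightarrow> bool" where
  "bkp2_tau \<tau> \<longleftrightarrow> smooth_tau \<tau> \<and>
     (\<forall>t ds. pds ds (hir \<tau> 1 (wt ds) t) t = pds ds (hir \<tau> 2 (wt ds) t) t)"

text \<open>Coefficients of the dressing operator W_a = sum_j wcoef a j \<partial>_a^(-j),
  wcoef a j = h_j(-2 tilde-partial_(t^(a))) tau / tau.\<close>
definition wcoef :: "fn \<Rightarrow> nat \<Rightarrow> nat \<Rightarrow> fn" where
  "wcoef \<tau> a j t = shiftc a (-2) j \<tau> t / \<tau> t"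

text \<open>Formal series in lambda twisted by exp(-xi(t^(b), lambda)):  r represents
  exp(-xi(t^(b),lambda)) * sum_(m::int) r m lambda^m.  The derivative \<partial>_a acts on it by
  the product rule.\<close>
type_synonym lser = "int \<Rightarrow> fn"

definition dxl :: "nat \<Rightarrow> nat \<Rightarrow> lser \<Rightarrow> lser" where
  "dxl a b r m = (\<lambda>t. pd a 0 (r m) t - (if a = b then r (m - 1) t else 0))"

text \<open>The eigenfunction psi_b(t,-lambda) = tau(t - 2[(-lambda)^-1]_b)/tau(t) exp(xi(t^(b),-lambda))
   = exp(-xi(t^(b),lambda)) * sum_j wcoef b j (-lambda)^(-j).\<close>
definition psi_neg :: "fn \<Rightarrow> nat \<Rightarrow> lser" where
  "psi_neg \<tau> b m = (if m \<le> 0 then (\<lambda>t. (-1) ^ nat (- m) * wcoef \<tau> b (nat (- m)) t) else (\<lambda>t. 0))"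

text \<open>Pseudo-differential operators  P = sum_(i>=0) P i \<partial>_a^(-i)  with twisted coefficients.
  Left composition with \<partial>_a^(-1):  \<partial>^(-1) f = sum_k (-1)^k f^(k) \<partial>^(-1-k).\<close>
definition inv_comp :: "nat \<Rightarrow> nat \<Rightarrow> (nat \<Rightarrow> lser) \<Rightarrow> (nat \<Rightarrow> lser)" where
  "inv_comp a b P n m = (\<lambda>t. \<Sum>k<n. (-1) ^ k * ((dxl a b ^^ k) (P (n - 1 - k)) m t))"

text \<open>Omega(q, psi_a(t,mu)) := ((-1)^a (q - 2 \<partial>_a^(-1) q_(x_a)) W_a)(exp(xi(t^(a),mu))),
  with \<partial>_a^(-n) exp(xi(t^(a),mu)) = mu^(-n) exp(xi(t^(a),mu)).
  Omega_coef \<tau> a b q n m t is the coefficient of mu^(-n) lambda^m in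
  Omega * exp(xi(t^(b),lambda) - xi(t^(a),mu)), for q twisted by exp(-xi(t^(b),lambda)).\<close>
definition Omega_coef :: "fn \<Rightarrow> nat \<Rightarrow> nat \<Rightarrow> lser \<Rightarrow> nat \<Rightarrow> int \<Rightarrow> fn" where
  "Omega_coef \<tau> a b q n m t =
     (-1) ^ a * (q m t * wcoef \<tau> a n t
       - 2 * inv_comp a b (\<lambda>i mm s. dxl a b q mm s * wcoef \<tau> a i s) n m t)"

text \<open>epsilon_ab(lambda,mu) expanded in lambda/mu: (mu+lambda)/(mu-lambda) = 1 + 2 sum_(k>=1) (lambda/mu)^k.\<close>
definition eps_coef :: "nat \<Rightarrow> nat \<Rightarrow> nat \<Rightarrow> complex" where
  "eps_coef a b k = (if a = b then (if k = 0 then 1 else 2) else (if k = 0 then 1 else 0))"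

text \<open>Coefficient of mu^(-n) lambda^m in
  (X_ab(lambda,mu) tau)(t) / tau(t) * exp(xi(t^(b),lambda) - xi(t^(a),mu)), where
  X_ab(lambda,mu) tau = eps_ab exp(xi(t^(a),mu) - xi(t^(b),lambda)) tau(t - 2[mu^-1]_a + 2[lambda^-1]_b).\<close>
definition Xab_coef :: "fn \<Rightarrow> nat \<Rightarrow> nat \<Rightarrow> nat \<Rightarrow> int \<Rightarrow> fn" where
  "Xab_coef \<tau> a b n m t =
     (\<Sum>k\<le>n. if int k \<ge> m then
        eps_coef a b k * shiftc a (-2) (n - k) (shiftc b 2 (nat (int k - m)) \<tau>) t / \<tau> t
      else 0)"

end

theory Submission
  imports Defs "HOL-Complex_Analysis.Cauchy_Integral_Formula"
begin

text \<open>Both sides are formal series in \<open>\<mu>\<^sup>-\<^sup>1\<close> and \<open>\<lambda>\<close> whose coefficients are quotients by \<open>\<tau>\<close>.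
  Since \<open>\<partial>\<^sub>a \<Omega> = \<psi>\<^sub>a q\<^sub>x - q \<psi>\<^sub>a\<^sub>,\<^sub>x\<close>, the coefficients of \<open>\<Omega>\<close> are determined by their value at order
  \<open>\<mu>\<^sup>0\<close> and a recursion in the order \<open>n\<close>; it suffices to show that the coefficients of
  \<open>X\<^sub>a\<^sub>b(\<lambda>,\<mu>)\<tau>/\<tau>\<close> satisfy the same recursion.  Cleared of denominators, this recursion is a
  family of Hirota bilinear equations for \<open>\<tau>\<close>.  They follow from the bilinear identity by applying
  \<open>\<partial>\<^sub>a h\<^sub>p(-2\<partial>\<^sub>a) h\<^sub>r(2\<partial>\<^sub>b)\<close> and setting \<open>t' = t\<close>: the shift operators \<open>h\<^sub>j(c\<partial>)\<close> are
  combinations of derivatives, so they preserve the identity, and at \<open>t' = t\<close> the products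
  \<open>\<tau>(t - 2[z\<^sup>-\<^sup>1]) \<tau>(t + 2[z\<^sup>-\<^sup>1])\<close> collapse.  For \<open>a \<noteq> b\<close> a single such equation gives the recursion;
  for \<open>a = b\<close> the factor \<open>(\<mu> + \<lambda>)/(\<mu> - \<lambda>)\<close> requires a two-parameter family, which is obtained
  by combining neighbouring equations and then telescoped.\<close>

section \<open>Partial derivatives\<close>

lemma tc_upd_same: "tc a (upd a k s t) k = s"
  by (simp add: tc_def upd_def)

lemma upd_tc: "upd a k (tc a t k) t = t"
  by (simp add: tc_def upd_def)

lemma upd_upd_same: "upd a k s' (upd a k s t) = upd a k s' t"
  by (simp add: upd_def)

definition partially_differentiable :: "fn \<Rightarrow> bool" where
  "partially_differentiable f \<longleftrightarrow>
     (\<forall>a k t. (\<lambda>s. f (upd a k s t)) field_differentiable (at (tc a t k)))"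

lemma partially_differentiableI:
  assumes "\<And>a k t s0. (\<lambda>s. f (upd a k s t)) field_differentiable (at s0)"
  shows "partially_differentiable f"
  using assms partially_differentiable_def by blast

lemma partially_differentiable_at:
  assumes "partially_differentiable f"
  shows "(\<lambda>s. f (upd a k s t)) field_differentiable (at s0)"
proof -
  have "(\<lambda>s. f (upd a k s (upd a k s0 t))) field_differentiable (at (tc a (upd a k s0 t) k))"
    using assms partially_differentiable_def by blast
  then show ?thesis by (simp add: upd_upd_same tc_upd_same)
qed

lemma partially_differentiable_add:
  "partially_differentiable f \<Longrightarrow> partially_differentiable g \<Longrightarrow>
   partially_differentiable (\<lambda>t. f t + g t)"
  unfolding partially_differentiable_def by (auto intro: field_differentiable_add)

lemma partially_differentiable_mult:
  "partially_differentiable f \<Longrightarrow> partially_differentiable g \<Longrightarrow>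
   partially_differentiable (\<lambda>t. f t * g t)"
  unfolding partially_differentiable_def by (auto intro: field_differentiable_mult)

lemma partially_differentiable_const: "partially_differentiable (\<lambda>t. c)"
  unfolding partially_differentiable_def by auto

lemma partially_differentiable_cmult:
  "partially_differentiable f \<Longrightarrow> partially_differentiable (\<lambda>t. c * f t)"
  using partially_differentiable_mult[OF partially_differentiable_const] by blast

lemma pd_add_at:
  "partially_differentiable f \<Longrightarrow> partially_differentiable g \<Longrightarrow>
   pd a k (\<lambda>t. f t + g t) t = pd a k f t + pd a k g t"
  unfolding pd_def by (rule deriv_add) (auto intro: partially_differentiable_at)

lemma pd_mult_at:
  "partially_differentiable f \<Longrightarrow> partially_differentiable g \<Longrightarrow>
   pd a k (\<lambda>t. f t * g t) t = pd a k f t * g t + f t * pd a k g t"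
  unfolding pd_def by (subst deriv_mult) (auto intro: partially_differentiable_at simp: upd_tc)

lemma pd_cmult_at:
  "partially_differentiable f \<Longrightarrow> pd a k (\<lambda>t. c * f t) t = c * pd a k f t"
  unfolding pd_def by (rule deriv_cmult) (auto intro: partially_differentiable_at)

lemma pd_const: "pd a k (\<lambda>t. c) t = 0"
  unfolding pd_def by simp

lemma pd_if_zero: "pd a k (\<lambda>t. if P then f t else 0) t = (if P then pd a k f t else 0)"
  by (cases P) (simp_all add: pd_const)

lemma pds_Nil [simp]: "pds [] f = f"
  by (simp add: pds_def)

lemma pds_Cons: "pds ((a,k) # ds) f = pd a k (pds ds f)"
  by (simp add: pds_def)

lemma pds_append: "pds (ds @ es) f = pds ds (pds es f)"
  by (simp add: pds_def)

lemma pds_const: "pds ds (\<lambda>t. c) = (\<lambda>t. if ds = [] then c else 0)"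
  by (induction ds) (auto simp: pds_def pd_const)

lemma pds_add_of_shorter:
  assumes "\<And>ds'. length ds' < length ds \<Longrightarrow>
             partially_differentiable (pds ds' f) \<and> partially_differentiable (pds ds' g)"
  shows "pds ds (\<lambda>t. f t + g t) = (\<lambda>t. pds ds f t + pds ds g t)"
  using assms
proof (induction ds)
  case (Cons x ds)
  obtain a k where x: "x = (a,k)" by (cases x)
  have "pds ds (\<lambda>t. f t + g t) = (\<lambda>t. pds ds f t + pds ds g t)"
    using Cons.prems by (intro Cons.IH) auto
  moreover have "partially_differentiable (pds ds f)" "partially_differentiable (pds ds g)"
    using Cons.prems[of ds] by auto
  ultimately show ?case by (simp add: x pds_Cons pd_add_at)
qed simp

text \<open>All iterated partial derivatives exist; unlike \<^const>\<open>smooth_tau\<close> this does not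
  require them to commute.\<close>

definition smooth :: "fn \<Rightarrow> bool" where
  "smooth f \<longleftrightarrow> (\<forall>ds. partially_differentiable (pds ds f))"

lemma smooth_partially_differentiable: "smooth f \<Longrightarrow> partially_differentiable f"
  using smooth_def[of f] pds_Nil by metis

lemma smooth_pds: "smooth f \<Longrightarrow> smooth (pds ds f)"
  by (simp add: smooth_def pds_append[symmetric])

lemma smooth_pd: "smooth f \<Longrightarrow> smooth (pd a k f)"
  using smooth_pds[of f "[(a,k)]"] by (simp add: pds_Cons)

lemma pds_add: "smooth f \<Longrightarrow> smooth g \<Longrightarrow> pds ds (\<lambda>t. f t + g t) = (\<lambda>t. pds ds f t + pds ds g t)"
  by (rule pds_add_of_shorter) (auto simp: smooth_def)

lemma pds_cmult: "smooth f \<Longrightarrow> pds ds (\<lambda>t. c * f t) = (\<lambda>t. c * pds ds f t)"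
proof (induction ds)
  case (Cons x ds)
  then show ?case
    by (cases x) (simp add: pds_Cons pd_cmult_at smooth_def)
qed simp

lemma smooth_add: "smooth f \<Longrightarrow> smooth g \<Longrightarrow> smooth (\<lambda>t. f t + g t)"
  by (simp add: smooth_def pds_add partially_differentiable_add)

lemma smooth_cmult: "smooth f \<Longrightarrow> smooth (\<lambda>t. c * f t)"
  by (simp add: smooth_def pds_cmult partially_differentiable_cmult)

lemma smooth_const: "smooth (\<lambda>t. c)"
  by (simp add: smooth_def pds_const partially_differentiable_const)

lemma smooth_if_zero: "smooth f \<Longrightarrow> smooth (\<lambda>t. if P then f t else 0)"
  by (cases P) (simp_all add: smooth_const)

lemma smooth_sum:
  "finite I \<Longrightarrow> (\<And>i. i \<in> I \<Longrightarrow> smooth (f i)) \<Longrightarrow> smooth (\<lambda>t. \<Sum>i\<in>I. f i t)"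
  by (induction I rule: finite_induct) (auto intro: smooth_add smooth_const)

lemma pds_sum:
  assumes "finite I" "\<And>i. i \<in> I \<Longrightarrow> smooth (f i)"
  shows "pds ds (\<lambda>t. \<Sum>i\<in>I. f i t) = (\<lambda>t. \<Sum>i\<in>I. pds ds (f i) t)"
  using assms
proof (induction I rule: finite_induct)
  case (insert x F)
  then show ?case by (simp add: pds_add smooth_sum)
qed (simp add: pds_const)

lemma pd_sum:
  "finite I \<Longrightarrow> (\<And>i. i \<in> I \<Longrightarrow> smooth (f i)) \<Longrightarrow>
   pd a k (\<lambda>t. \<Sum>i\<in>I. f i t) = (\<lambda>t. \<Sum>i\<in>I. pd a k (f i) t)"
  using pds_sum[of I f "[(a,k)]"] by (simp add: pds_Cons)

lemma pd_add: "smooth f \<Longrightarrow> smooth g \<Longrightarrow> pd a k (\<lambda>t. f t + g t) = (\<lambda>t. pd a k f t + pd a k g t)"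
  using pds_add[of f g "[(a,k)]"] by (simp add: pds_Cons)

lemma pd_cmult: "smooth f \<Longrightarrow> pd a k (\<lambda>t. c * f t) = (\<lambda>t. c * pd a k f t)"
  using pds_cmult[of f "[(a,k)]"] by (simp add: pds_Cons)

lemma pd_mult:
  "smooth f \<Longrightarrow> smooth g \<Longrightarrow> pd a k (\<lambda>t. f t * g t) = (\<lambda>t. pd a k f t * g t + f t * pd a k g t)"
  by (rule ext, rule pd_mult_at) (auto intro: smooth_partially_differentiable)

lemma partially_differentiable_pds_mult:
  assumes "smooth f" "smooth g"
  shows "partially_differentiable (pds ds (\<lambda>t. f t * g t))"
  using assms
proof (induction "length ds" arbitrary: f g ds rule: less_induct)
  case less
  show ?case
  proof (cases ds rule: rev_cases)
    case Nil
    then show ?thesis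
      using less.prems by (simp add: partially_differentiable_mult smooth_partially_differentiable)
  next
    case (snoc ds0 x)
    obtain a k where x: "x = (a,k)" by (cases x)
    have IH: "\<And>F G ds'. smooth F \<Longrightarrow> smooth G \<Longrightarrow> length ds' \<le> length ds0 \<Longrightarrow>
                partially_differentiable (pds ds' (\<lambda>t. F t * G t))"
      using less.hyps snoc by auto
    have left: "\<And>ds'. length ds' \<le> length ds0 \<Longrightarrow>
                  partially_differentiable (pds ds' (\<lambda>t. pd a k f t * g t))"
     and right: "\<And>ds'. length ds' \<le> length ds0 \<Longrightarrow>
                  partially_differentiable (pds ds' (\<lambda>t. f t * pd a k g t))"
      using IH less.prems smooth_pd by blast+
    have "pds ds (\<lambda>t. f t * g t) = pds ds0 (\<lambda>t. pd a k f t * g t + f t * pd a k g t)"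
      using less.prems by (simp add: snoc x pds_append pds_Cons pd_mult)
    also have "\<dots> = (\<lambda>t. pds ds0 (\<lambda>t. pd a k f t * g t) t + pds ds0 (\<lambda>t. f t * pd a k g t) t)"
      using left right by (intro pds_add_of_shorter) auto
    finally show ?thesis
      using left right by (simp add: partially_differentiable_add)
  qed
qed

lemma smooth_mult: "smooth f \<Longrightarrow> smooth g \<Longrightarrow> smooth (\<lambda>t. f t * g t)"
  unfolding smooth_def using partially_differentiable_pds_mult[unfolded smooth_def] by blast

lemma smooth_pd_power: "smooth f \<Longrightarrow> smooth ((pd a 0 ^^ e) f)"
  by (induction e) (auto intro: smooth_pd)

lemma pd_power_sum:
  assumes "finite I" "\<And>i. i \<in> I \<Longrightarrow> smooth (f i)"
  shows "(pd a 0 ^^ e) (\<lambda>t. \<Sum>i\<in>I. f i t) = (\<lambda>t. \<Sum>i\<in>I. (pd a 0 ^^ e) (f i) t)"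
proof (induction e)
  case (Suc e)
  then show ?case using assms by (simp add: pd_sum smooth_pd_power)
qed simp

lemma pd_power_cmult:
  "smooth f \<Longrightarrow> (pd a 0 ^^ e) (\<lambda>t. k * f t) = (\<lambda>t. k * (pd a 0 ^^ e) f t)"
  by (induction e) (simp_all add: pd_cmult smooth_pd_power)

lemma pd_power_zero: "(pd a 0 ^^ e) (\<lambda>t. 0) = (\<lambda>t. 0)"
  by (induction e) (auto simp: pd_const)

section \<open>The shift operators \<open>h\<^sub>j(c \<partial>\<^sub>a)\<close>\<close>

lemma sum_atMost_rev: "(\<Sum>i\<le>n. f (n - i)) = (\<Sum>i\<le>(n::nat). f i)"
  by (rule sum.reindex_bij_witness[where i="\<lambda>i. n - i" and j="\<lambda>i. n - i"]) auto

lemma sum_atMost_convolution_rev: "(\<Sum>i\<le>n. f (n - i) i) = (\<Sum>i\<le>(n::nat). f i (n - i))"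
proof -
  have "(\<Sum>i\<le>n. f (n - i) i) = (\<Sum>i\<le>n. f (n - i) (n - (n - i)))"
    by (rule sum.cong) auto
  then show ?thesis by (simp only: sum_atMost_rev[where f="\<lambda>i. f i (n - i)"])
qed

lemma sum_odd_steps_reindex:
  fixes F :: "nat \<Rightarrow> nat \<Rightarrow> nat \<Rightarrow> 'a::comm_monoid_add"
  shows "(\<Sum>i\<le>s. \<Sum>l<(i+1) div 2. F l (i-(2*l+1)) (s-i)) =
         (\<Sum>l<(s+1) div 2. \<Sum>j\<le>s-(2*l+1). F l j (s-(2*l+1)-j))"
  unfolding sum.Sigma[OF finite_atMost ballI[OF finite_lessThan]]
            sum.Sigma[OF finite_lessThan ballI[OF finite_atMost]]
  by (rule sum.reindex_bij_witness[where i="\<lambda>(l,j). (j+2*l+1, l)" and j="\<lambda>(i,l). (l, i-(2*l+1))"])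
     (auto; presburger)+

text \<open>\<^const>\<open>hpoly\<close> and \<^const>\<open>shiftc\<close> are defined by recursions of the form
  \<open>j X(j) = \<Sum>\<^sub>l c\<^sub>l X(j - 2l - 1)\<close>.  Convolutions \<open>\<Sum>\<^sub>i F i (p - i)\<close> of two such sequences
  satisfy the same recursion, because the weight \<open>p\<close> splits as \<open>i + (p - i)\<close>.\<close>

lemma convolution_euler_rec:
  fixes F :: "nat \<Rightarrow> nat \<Rightarrow> 'a::comm_semiring_1"
  assumes left: "\<And>i j. of_nat i * F i j = (\<Sum>l<(i+1) div 2. A l (i-(2*l+1)) j)"
    and right: "\<And>i j. of_nat j * F i j = (\<Sum>l<(j+1) div 2. B l i (j-(2*l+1)))"
  shows "of_nat p * (\<Sum>i\<le>p. F i (p-i)) =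
         (\<Sum>l<(p+1) div 2. \<Sum>j\<le>p-(2*l+1). A l j (p-(2*l+1)-j) + B l j (p-(2*l+1)-j))"
proof -
  have "of_nat p * (\<Sum>i\<le>p. F i (p-i)) =
        (\<Sum>i\<le>p. of_nat i * F i (p-i)) + (\<Sum>i\<le>p. of_nat (p-i) * F i (p-i))"
    by (simp add: sum_distrib_left sum.distrib[symmetric] distrib_right[symmetric]
                  of_nat_add[symmetric] del: of_nat_add)
  also have "(\<Sum>i\<le>p. of_nat i * F i (p-i)) =
             (\<Sum>l<(p+1) div 2. \<Sum>j\<le>p-(2*l+1). A l j (p-(2*l+1)-j))"
    unfolding left by (rule sum_odd_steps_reindex)
  also have "(\<Sum>i\<le>p. of_nat (p-i) * F i (p-i)) = (\<Sum>i\<le>p. of_nat i * F (p-i) i)"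
    by (rule sum_atMost_convolution_rev[where f="\<lambda>x y. of_nat y * F x y", symmetric])
  also have "\<dots> = (\<Sum>i\<le>p. \<Sum>l<(i+1) div 2. B l (p-i) (i-(2*l+1)))"
    unfolding right ..
  also have "\<dots> = (\<Sum>l<(p+1) div 2. \<Sum>j\<le>p-(2*l+1). B l (p-(2*l+1)-j) j)"
    by (rule sum_odd_steps_reindex[where F="\<lambda>l x y. B l y x"])
  also have "\<dots> = (\<Sum>l<(p+1) div 2. \<Sum>j\<le>p-(2*l+1). B l j (p-(2*l+1)-j))"
    by (intro sum.cong refl sum_atMost_convolution_rev)
  finally show ?thesis by (simp add: sum.distrib)
qed

declare shiftc.simps [simp del]

lemma shiftc_0 [simp]: "shiftc a c 0 f = f"
  by (subst shiftc.simps) simp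

lemma shiftc_pos: "0 < j \<Longrightarrow> shiftc a c j f =
   (\<lambda>t. (1 / of_nat j) * (\<Sum>i<(j+1) div 2. c * pd a i (shiftc a c (j - (2*i+1)) f) t))"
  by (subst shiftc.simps) simp

lemma shiftc_rec:
  "of_nat j * shiftc a c j f t = (\<Sum>l<(j+1) div 2. c * pd a l (shiftc a c (j-(2*l+1)) f) t)"
  by (cases "j = 0") (simp_all add: shiftc_pos)

lemma shiftc_1: "shiftc a c 1 f = (\<lambda>t. c * pd a 0 f t)"
  by (simp add: shiftc_pos)

lemma shiftc_unique:
  assumes "X 0 = f"
    and "\<And>j t. 0 < j \<Longrightarrow> of_nat j * X j t = (\<Sum>l<(j+1) div 2. c * pd a l (X (j-(2*l+1))) t)"
  shows "shiftc a c j f = X j"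
proof (induction j rule: less_induct)
  case (less j)
  show ?case
  proof (cases "j = 0")
    case False
    then have "0 < j" by simp
    have "of_nat j * shiftc a c j f t = of_nat j * X j t" for t
      unfolding shiftc_rec assms(2)[OF \<open>0 < j\<close>]
      using less False by (intro sum.cong refl arg_cong[where f="\<lambda>g. c * pd a _ g t"] less.IH) auto
    then show ?thesis using False by auto
  qed (simp add: assms(1))
qed

lemma smooth_shiftc: "smooth f \<Longrightarrow> smooth (shiftc a c j f)"
proof (induction j rule: less_induct)
  case (less j)
  show ?case
  proof (cases "j = 0")
    case False
    then have "0 < j" by simp
    then show ?thesis
      unfolding shiftc_pos[OF \<open>0 < j\<close>]
      by (intro smooth_cmult smooth_sum smooth_pd less.IH less.prems) auto
  qed (simp add: less.prems)
qed

lemma shiftc_add: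
  assumes "smooth f" "smooth g"
  shows "shiftc a c j (\<lambda>t. f t + g t) = (\<lambda>t. shiftc a c j f t + shiftc a c j g t)"
proof -
  have "shiftc a c j (\<lambda>t. f t + g t) = (\<lambda>j t. shiftc a c j f t + shiftc a c j g t) j"
  proof (rule shiftc_unique)
    fix j t
    show "of_nat j * (shiftc a c j f t + shiftc a c j g t) =
          (\<Sum>l<(j+1) div 2. c * pd a l (\<lambda>t. shiftc a c (j-(2*l+1)) f t + shiftc a c (j-(2*l+1)) g t) t)"
      by (simp add: distrib_left shiftc_rec sum.distrib[symmetric] pd_add smooth_shiftc assms)
  qed simp
  then show ?thesis by simp
qed

lemma shiftc_cmult:
  assumes "smooth f"
  shows "shiftc a c j (\<lambda>t. k * f t) = (\<lambda>t. k * shiftc a c j f t)"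
proof -
  have "shiftc a c j (\<lambda>t. k * f t) = (\<lambda>j t. k * shiftc a c j f t) j"
  proof (rule shiftc_unique)
    fix j t
    have "of_nat j * (k * shiftc a c j f t) = k * (of_nat j * shiftc a c j f t)"
      by (simp add: algebra_simps)
    then show "of_nat j * (k * shiftc a c j f t) =
               (\<Sum>l<(j+1) div 2. c * pd a l (\<lambda>t. k * shiftc a c (j-(2*l+1)) f t) t)"
      by (simp add: shiftc_rec sum_distrib_left pd_cmult smooth_shiftc assms algebra_simps)
  qed simp
  then show ?thesis by simp
qed

lemma shiftc_const: "shiftc a c j (\<lambda>t. k) = (\<lambda>t. if j = 0 then k else 0)"
proof -
  have "shiftc a c j (\<lambda>t. k) = (\<lambda>j t. if j = 0 then k else 0) j"
    by (rule shiftc_unique) (auto simp: pd_const)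
  then show ?thesis by simp
qed

lemma shiftc_zero_param: "shiftc a 0 j f = (if j = 0 then f else (\<lambda>t. 0))"
proof -
  have "shiftc a 0 j f = (\<lambda>j. if j = 0 then f else (\<lambda>t. 0)) j"
    by (rule shiftc_unique) auto
  then show ?thesis by simp
qed

lemma shiftc_sum:
  assumes "finite I" "\<And>i. i \<in> I \<Longrightarrow> smooth (f i)"
  shows "shiftc a c j (\<lambda>t. \<Sum>i\<in>I. f i t) = (\<lambda>t. \<Sum>i\<in>I. shiftc a c j (f i) t)"
  using assms
proof (induction I rule: finite_induct)
  case empty
  then show ?case using shiftc_const[of a c j 0] by simp
next
  case (insert x F)
  then show ?case by (simp add: shiftc_add smooth_sum)
qed

lemma minus_one_power_odd_step:
  assumes "2*l+1 \<le> j"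
  shows "(-1::'a::ring_1)^j = - ((-1)^(j-(2*l+1)))"
proof -
  have "j = (j-(2*l+1)) + (2*l+1)"
    using assms by simp
  then have "(-1::'a)^j = (-1)^(j-(2*l+1)) * (-1)^(2*l+1)"
    by (metis power_add)
  then show ?thesis by simp
qed

lemma shiftc_uminus:
  assumes "smooth f"
  shows "shiftc a (-c) j f = (\<lambda>t. (-1)^j * shiftc a c j f t)"
proof -
  have "shiftc a (-c) j f = (\<lambda>j t. (-1)^j * shiftc a c j f t) j"
  proof (rule shiftc_unique)
    fix j t
    have "of_nat j * ((-1)^j * shiftc a c j f t) = (-1)^j * (of_nat j * shiftc a c j f t)"
      by (simp add: algebra_simps)
    also have "\<dots> = (\<Sum>l<(j+1) div 2. (-1)^j * (c * pd a l (shiftc a c (j-(2*l+1)) f) t))"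
      by (simp add: shiftc_rec sum_distrib_left)
    also have "\<dots> = (\<Sum>l<(j+1) div 2.
                     - c * pd a l (\<lambda>t. (-1)^(j-(2*l+1)) * shiftc a c (j-(2*l+1)) f t) t)"
    proof (intro sum.cong refl)
      fix l assume "l \<in> {..<(j+1) div 2}"
      then have "2*l+1 \<le> j" by auto
      then show "(-1)^j * (c * pd a l (shiftc a c (j-(2*l+1)) f) t) =
                 - c * pd a l (\<lambda>t. (-1)^(j-(2*l+1)) * shiftc a c (j-(2*l+1)) f t) t"
        by (simp add: minus_one_power_odd_step pd_cmult smooth_shiftc assms)
    qed
    finally show "of_nat j * ((-1)^j * shiftc a c j f t) =
      (\<Sum>l<(j+1) div 2. - c * pd a l (\<lambda>t. (-1)^(j-(2*l+1)) * shiftc a c (j-(2*l+1)) f t) t)" .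
  qed simp
  then show ?thesis by simp
qed

lemma shiftc_mult:
  assumes f: "smooth f" and g: "smooth g"
  shows "shiftc a c p (\<lambda>t. f t * g t) = (\<lambda>t. \<Sum>i\<le>p. shiftc a c i f t * shiftc a c (p-i) g t)"
proof -
  define S where "S i = shiftc a c i f" for i
  define T where "T i = shiftc a c i g" for i
  have smooth_ST: "smooth (S i)" "smooth (T i)" for i
    unfolding S_def T_def using f g by (auto intro: smooth_shiftc)
  have "shiftc a c p (\<lambda>t. f t * g t) = (\<lambda>p t. \<Sum>i\<le>p. S i t * T (p-i) t) p"
  proof (rule shiftc_unique)
    fix p t
    have "of_nat p * (\<Sum>i\<le>p. S i t * T (p-i) t) =
          (\<Sum>l<(p+1) div 2. \<Sum>j\<le>p-(2*l+1).
             c * pd a l (S j) t * T (p-(2*l+1)-j) t + S j t * (c * pd a l (T (p-(2*l+1)-j)) t))"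
    proof (rule convolution_euler_rec)
      show "of_nat i * (S i t * T j t) = (\<Sum>l<(i+1) div 2. c * pd a l (S (i-(2*l+1))) t * T j t)"
        for i j
        unfolding mult.assoc[symmetric] S_def shiftc_rec sum_distrib_right ..
      show "of_nat j * (S i t * T j t) = (\<Sum>l<(j+1) div 2. S i t * (c * pd a l (T (j-(2*l+1))) t))"
        for i j
        unfolding mult.left_commute[of "of_nat j"] T_def shiftc_rec sum_distrib_left ..
    qed
    also have "\<dots> = (\<Sum>l<(p+1) div 2. c * (\<Sum>j\<le>p-(2*l+1).
                 pd a l (S j) t * T (p-(2*l+1)-j) t + S j t * pd a l (T (p-(2*l+1)-j)) t))"
      by (simp add: sum_distrib_left distrib_left mult.assoc mult.left_commute)
    also have "\<dots> = (\<Sum>l<(p+1) div 2. c * pd a l (\<lambda>t. \<Sum>i\<le>p-(2*l+1). S i t * T (p-(2*l+1)-i) t) t)"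
      by (simp add: pd_sum pd_mult smooth_mult smooth_ST)
    finally show "of_nat p * (\<Sum>i\<le>p. S i t * T (p-i) t) =
          (\<Sum>l<(p+1) div 2. c * pd a l (\<lambda>t. \<Sum>i\<le>p-(2*l+1). S i t * T (p-(2*l+1)-i) t) t)" .
  qed (simp add: S_def T_def)
  then show ?thesis by (simp add: S_def T_def)
qed

text \<open>On the linear span of the derivatives of a function whose partial derivatives commute,
  the shift operators commute with each other and with the partial derivatives.\<close>

inductive_set pds_span :: "fn \<Rightarrow> fn set" for f0 :: fn where
  pds: "pds ds f0 \<in> pds_span f0"
| add: "f \<in> pds_span f0 \<Longrightarrow> g \<in> pds_span f0 \<Longrightarrow> (\<lambda>t. f t + g t) \<in> pds_span f0"
| cmult: "f \<in> pds_span f0 \<Longrightarrow> (\<lambda>t. k * f t) \<in> pds_span f0"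

lemma smooth_tau_smooth: "smooth_tau f \<Longrightarrow> smooth f"
  unfolding smooth_tau_def smooth_def partially_differentiable_def by blast

lemma smooth_tau_pd_commute: "smooth_tau f \<Longrightarrow> pd a k (pd b l (pds ds f)) = pd b l (pd a k (pds ds f))"
  unfolding smooth_tau_def by blast

context
  fixes \<tau> :: fn
  assumes \<tau>: "smooth_tau \<tau>"
begin

lemma pds_span_smooth: "f \<in> pds_span \<tau> \<Longrightarrow> smooth f"
  by (induction rule: pds_span.induct)
     (auto intro: smooth_pds smooth_add smooth_cmult smooth_tau_smooth[OF \<tau>])

lemma pds_span_self: "\<tau> \<in> pds_span \<tau>"
  using pds_span.pds[of "[]"] by simp

lemma pds_span_zero: "(\<lambda>t. 0) \<in> pds_span \<tau>"
  using pds_span.cmult[OF pds_span_self, of 0] by simp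

lemma pds_span_sum:
  "finite I \<Longrightarrow> (\<And>i. i \<in> I \<Longrightarrow> f i \<in> pds_span \<tau>) \<Longrightarrow> (\<lambda>t. \<Sum>i\<in>I. f i t) \<in> pds_span \<tau>"
  by (induction I rule: finite_induct) (auto intro: pds_span.add pds_span_zero)

lemma pds_span_pd: "f \<in> pds_span \<tau> \<Longrightarrow> pd a k f \<in> pds_span \<tau>"
proof (induction rule: pds_span.induct)
  case (pds ds)
  then show ?case using pds_span.pds[of "(a,k) # ds"] by (simp add: pds_Cons)
qed (simp_all add: pd_add pd_cmult pds_span_smooth pds_span.add pds_span.cmult)

lemma pds_span_pd_commute: "f \<in> pds_span \<tau> \<Longrightarrow> pd a k (pd b l f) = pd b l (pd a k f)"
proof (induction rule: pds_span.induct)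
  case (pds ds)
  then show ?case by (rule smooth_tau_pd_commute[OF \<tau>])
qed (simp_all add: pd_add pd_cmult pds_span_smooth smooth_pd)

lemma pds_span_shiftc: "f \<in> pds_span \<tau> \<Longrightarrow> shiftc a c j f \<in> pds_span \<tau>"
proof (induction j rule: less_induct)
  case (less j)
  show ?case
  proof (cases "j = 0")
    case False
    then have "0 < j" by simp
    then show ?thesis
      unfolding shiftc_pos[OF \<open>0 < j\<close>]
      by (intro pds_span.cmult pds_span_sum pds_span_pd less.IH less.prems) auto
  qed (simp add: less.prems)
qed

lemma pd_shiftc_commute:
  assumes f: "f \<in> pds_span \<tau>"
  shows "pd b l (shiftc a c j f) = shiftc a c j (pd b l f)"
proof -
  have "shiftc a c j (pd b l f) = (\<lambda>j. pd b l (shiftc a c j f)) j"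
  proof (rule shiftc_unique)
    fix j t
    have "of_nat j * pd b l (shiftc a c j f) t = pd b l (\<lambda>t. of_nat j * shiftc a c j f t) t"
      by (simp add: pd_cmult smooth_shiftc pds_span_smooth f)
    also have "\<dots> = (\<Sum>i<(j+1) div 2. c * pd b l (pd a i (shiftc a c (j-(2*i+1)) f)) t)"
      unfolding shiftc_rec
      by (simp add: pd_sum pd_cmult smooth_cmult smooth_pd smooth_shiftc pds_span_smooth f)
    also have "\<dots> = (\<Sum>i<(j+1) div 2. c * pd a i (pd b l (shiftc a c (j-(2*i+1)) f)) t)"
      by (simp add: pds_span_pd_commute pds_span_shiftc f)
    finally show "of_nat j * pd b l (shiftc a c j f) t =
                  (\<Sum>i<(j+1) div 2. c * pd a i (pd b l (shiftc a c (j-(2*i+1)) f)) t)" .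
  qed simp
  then show ?thesis by simp
qed

lemma shiftc_euler_rec_inner:
  assumes f: "f \<in> pds_span \<tau>"
  shows "of_nat j * shiftc b d i (shiftc a c j f) t =
         (\<Sum>l<(j+1) div 2. c * pd a l (shiftc b d i (shiftc a c (j-(2*l+1)) f)) t)"
proof -
  have "of_nat j * shiftc b d i (shiftc a c j f) t = shiftc b d i (\<lambda>t. of_nat j * shiftc a c j f t) t"
    by (simp add: shiftc_cmult smooth_shiftc pds_span_smooth f)
  also have "\<dots> = (\<Sum>l<(j+1) div 2. c * shiftc b d i (pd a l (shiftc a c (j-(2*l+1)) f)) t)"
    unfolding shiftc_rec
    by (simp add: shiftc_sum shiftc_cmult smooth_cmult smooth_pd smooth_shiftc pds_span_smooth f)
  also have "\<dots> = (\<Sum>l<(j+1) div 2. c * pd a l (shiftc b d i (shiftc a c (j-(2*l+1)) f)) t)"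
    by (simp add: pd_shiftc_commute pds_span_shiftc f)
  finally show ?thesis .
qed

lemma shiftc_commute:
  assumes f: "f \<in> pds_span \<tau>"
  shows "shiftc a c j (shiftc b d i f) = shiftc b d i (shiftc a c j f)"
proof -
  have "shiftc a c j (shiftc b d i f) = (\<lambda>j. shiftc b d i (shiftc a c j f)) j"
    by (rule shiftc_unique) (simp_all add: shiftc_euler_rec_inner f)
  then show ?thesis by simp
qed

text \<open>Coefficientwise form of \<open>exp(c \<xi>) exp(d \<xi>) = exp((c + d) \<xi>)\<close> for
  \<open>\<xi> = \<xi>(\<partial>\<^sub>a, z\<^sup>-\<^sup>1)\<close>.\<close>

lemma shiftc_shiftc_same:
  assumes f: "f \<in> pds_span \<tau>"
  shows "(\<lambda>t. \<Sum>i\<le>s. shiftc a c i (shiftc a d (s-i) f) t) = shiftc a (c+d) s f"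
proof -
  define X where "X = (\<lambda>s t. \<Sum>i\<le>s. shiftc a c i (shiftc a d (s-i) f) t)"
  have "shiftc a (c+d) s f = X s"
  proof (rule shiftc_unique)
    fix p t
    have "of_nat p * X p t =
          (\<Sum>l<(p+1) div 2. \<Sum>j\<le>p-(2*l+1).
             c * pd a l (shiftc a c j (shiftc a d (p-(2*l+1)-j) f)) t +
             d * pd a l (shiftc a c j (shiftc a d (p-(2*l+1)-j) f)) t)"
      unfolding X_def
      by (rule convolution_euler_rec) (simp_all only: shiftc_rec shiftc_euler_rec_inner f)
    also have "\<dots> = (\<Sum>l<(p+1) div 2. (c+d) * pd a l (X (p-(2*l+1))) t)"
      unfolding X_def
      by (simp add: pd_sum smooth_shiftc pds_span_smooth f sum_distrib_left distrib_right)
    finally show "of_nat p * X p t = (\<Sum>l<(p+1) div 2. (c+d) * pd a l (X (p-(2*l+1))) t)" .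
  qed (simp add: X_def)
  then show ?thesis by (simp add: X_def)
qed

lemma shiftc_shiftc_uminus:
  assumes "f \<in> pds_span \<tau>"
  shows "(\<lambda>t. \<Sum>i\<le>s. shiftc a c i (shiftc a (-c) (s-i) f) t) = (if s = 0 then f else (\<lambda>t. 0))"
  using shiftc_shiftc_same[OF assms, where d="-c"] by (simp add: shiftc_zero_param)

end

section \<open>Elementary Schur polynomials\<close>

declare hpoly.simps [simp del]

lemma hpoly_0 [simp]: "hpoly y 0 = 1"
  by (subst hpoly.simps) simp

lemma hpoly_pos: "0 < j \<Longrightarrow> hpoly y j =
   (1 / of_nat j) * (\<Sum>i<(j+1) div 2. of_nat (2*i+1) * y i * hpoly y (j - (2*i+1)))"
  by (subst hpoly.simps) simp

lemma hpoly_rec: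
  "of_nat j * hpoly y j = (\<Sum>i<(j+1) div 2. of_nat (2*i+1) * y i * hpoly y (j - (2*i+1)))"
  by (cases "j = 0") (simp_all add: hpoly_pos)

lemma hpoly_unique:
  assumes "X 0 = 1"
    and "\<And>j. 0 < j \<Longrightarrow> of_nat j * X j = (\<Sum>i<(j+1) div 2. of_nat (2*i+1) * y i * X (j - (2*i+1)))"
  shows "hpoly y j = X j"
proof (induction j rule: less_induct)
  case (less j)
  show ?case
  proof (cases "j = 0")
    case False
    then have "0 < j" by simp
    have "of_nat j * hpoly y j = of_nat j * X j"
      unfolding hpoly_rec assms(2)[OF \<open>0 < j\<close>]
      using less False by (intro sum.cong refl arg_cong[where f="\<lambda>x. _ * x"] less.IH) auto
    then show ?thesis using False by auto
  qed (simp add: assms(1))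
qed

lemma hpoly_zero: "hpoly (\<lambda>l. 0) j = (if j = 0 then 1 else 0)"
  by (rule hpoly_unique) auto

lemma hpoly_uminus: "hpoly (\<lambda>l. - y l) j = (-1)^j * hpoly y j"
proof (rule hpoly_unique)
  fix j :: nat
  have "of_nat j * ((-1)^j * hpoly y j) = (-1)^j * (of_nat j * hpoly y j)"
    by (simp add: algebra_simps)
  also have "\<dots> = (\<Sum>i<(j+1) div 2. (-1)^j * (of_nat (2*i+1) * y i * hpoly y (j - (2*i+1))))"
    by (simp add: hpoly_rec sum_distrib_left)
  also have "\<dots> = (\<Sum>i<(j+1) div 2.
                     of_nat (2*i+1) * (- y i) * ((-1)^(j - (2*i+1)) * hpoly y (j - (2*i+1))))"
  proof (intro sum.cong refl)
    fix i assume "i \<in> {..<(j+1) div 2}"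
    then have "2*i+1 \<le> j" by auto
    then show "(-1)^j * (of_nat (2*i+1) * y i * hpoly y (j - (2*i+1))) =
               of_nat (2*i+1) * (- y i) * ((-1)^(j - (2*i+1)) * hpoly y (j - (2*i+1)))"
      by (simp add: minus_one_power_odd_step)
  qed
  finally show "of_nat j * ((-1)^j * hpoly y j) = (\<Sum>i<(j+1) div 2.
      of_nat (2*i+1) * (- y i) * ((-1)^(j - (2*i+1)) * hpoly y (j - (2*i+1))))" .
qed simp

lemma hpoly_deriv_identity:
  "(\<Sum>i<(j+1) div 2. of_nat (2*i+1) *
      ((if i = l then 1 else 0) * hpoly y (j-(2*i+1)) +
       y i * (if 2*l+1 \<le> j-(2*i+1) then hpoly y (j-(2*i+1)-(2*l+1)) else 0))) =
   of_nat j * (if 2*l+1 \<le> j then hpoly y (j-(2*l+1)) else 0)"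
proof (cases "2*l+1 \<le> j")
  case True
  define j' where "j' = j - (2*l+1)"
  have "l \<in> {..<(j+1) div 2}" using True by auto
  then have diag: "(\<Sum>i<(j+1) div 2. of_nat (2*i+1) * (if i = l then 1 else 0) * hpoly y (j-(2*i+1)))
                   = of_nat (2*l+1) * hpoly y j'"
    unfolding j'_def by (simp add: if_distrib[of "\<lambda>x. _ * x * _"] sum.delta cong: if_cong)
  have rest: "(\<Sum>i<(j+1) div 2. of_nat (2*i+1) *
                 (y i * (if 2*l+1 \<le> j-(2*i+1) then hpoly y (j-(2*i+1)-(2*l+1)) else 0)))
              = (\<Sum>i<(j'+1) div 2. of_nat (2*i+1) * y i * hpoly y (j' - (2*i+1)))"
    by (rule sum.mono_neutral_cong_right) (auto simp: j'_def algebra_simps)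
  have "of_nat (2*l+1) * hpoly y j' + of_nat j' * hpoly y j' = of_nat j * hpoly y j'"
    using True unfolding j'_def by (simp add: algebra_simps of_nat_diff)
  then show ?thesis
    using diag rest hpoly_rec[of j' y] True
    by (simp add: distrib_left sum.distrib mult.assoc j'_def)
next
  case False
  then show ?thesis by (auto intro!: sum.neutral)
qed

lemma hpoly_deriv:
  "((\<lambda>s. hpoly (y(l:=s)) j) has_field_derivative
     (if 2*l+1 \<le> j then hpoly (y(l:=s0)) (j-(2*l+1)) else 0)) (at s0)"
proof (induction j rule: less_induct)
  case (less j)
  show ?case
  proof (cases "j = 0")
    case False
    define y0 where "y0 = y(l:=s0)"
    have IH: "((\<lambda>s. hpoly (y(l:=s)) (j-(2*i+1))) has_field_derivative
               (if 2*l+1 \<le> j-(2*i+1) then hpoly y0 (j-(2*i+1)-(2*l+1)) else 0)) (at s0)"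
      if "i \<in> {..<(j+1) div 2}" for i
      unfolding y0_def using that False by (intro less.IH) auto
    have coord: "((\<lambda>s. (y(l:=s)) i) has_field_derivative (if i = l then 1 else 0)) (at s0)" for i
      by (auto simp: fun_upd_def)
    have summand: "((\<lambda>s. of_nat (2*i+1) * ((y(l:=s)) i * hpoly (y(l:=s)) (j-(2*i+1))))
        has_field_derivative of_nat (2*i+1) * ((if i = l then 1 else 0) * hpoly y0 (j-(2*i+1)) +
          y0 i * (if 2*l+1 \<le> j-(2*i+1) then hpoly y0 (j-(2*i+1)-(2*l+1)) else 0))) (at s0)"
      if "i \<in> {..<(j+1) div 2}" for i
      using DERIV_cmult[OF DERIV_mult'[OF coord IH[OF that]], of "of_nat (2*i+1)"]
      by (rule DERIV_cong) (simp add: y0_def algebra_simps)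
    have deriv: "((\<lambda>s. (1 / of_nat j) *
              (\<Sum>i<(j+1) div 2. of_nat (2*i+1) * ((y(l:=s)) i * hpoly (y(l:=s)) (j-(2*i+1)))))
           has_field_derivative
           (1 / of_nat j) * (\<Sum>i<(j+1) div 2. of_nat (2*i+1) *
              ((if i = l then 1 else 0) * hpoly y0 (j-(2*i+1)) +
               y0 i * (if 2*l+1 \<le> j-(2*i+1) then hpoly y0 (j-(2*i+1)-(2*l+1)) else 0)))) (at s0)"
      by (intro DERIV_cmult DERIV_sum summand)
    have rec: "(\<lambda>s. (1 / of_nat j) *
        (\<Sum>i<(j+1) div 2. of_nat (2*i+1) * ((y(l:=s)) i * hpoly (y(l:=s)) (j-(2*i+1))))) =
        (\<lambda>s. hpoly (y(l:=s)) j)"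
      using False by (simp add: hpoly_pos mult.assoc)
    have val: "(1 / of_nat j) * (\<Sum>i<(j+1) div 2. of_nat (2*i+1) *
              ((if i = l then 1 else 0) * hpoly y0 (j-(2*i+1)) +
               y0 i * (if 2*l+1 \<le> j-(2*i+1) then hpoly y0 (j-(2*i+1)-(2*l+1)) else 0))) =
        (if 2*l+1 \<le> j then hpoly y0 (j-(2*l+1)) else 0)"
      unfolding hpoly_deriv_identity using False by simp
    show ?thesis
      using deriv[unfolded rec val] unfolding y0_def .
  qed simp
qed

text \<open>\<open>shift_coeff k\<close> are the Taylor coefficients of
  \<open>exp(-k \<Sum>\<^sub>l z\<^sup>2\<^sup>l\<^sup>+\<^sup>1/(2l+1)) = ((1-z)/(1+z))\<^sup>k\<^sup>/\<^sup>2\<close>.\<close>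

definition shift_coeff :: "complex \<Rightarrow> nat \<Rightarrow> complex" where
  "shift_coeff k j = hpoly (\<lambda>l. - k / of_nat (2*l+1)) j"

lemma shift_coeff_rec: "of_nat j * shift_coeff k j = (\<Sum>i<(j+1) div 2. - k * shift_coeff k (j - (2*i+1)))"
  unfolding shift_coeff_def by (subst hpoly_rec) (rule sum.cong, auto simp del: of_nat_Suc)

lemma sum_odd_step_weights:
  "(\<Sum>i<(j+1) div 2. if j = 2*i+1 then 1 else 2) = (of_nat j :: complex)"
proof (cases "even j")
  case True
  then obtain m where j: "j = 2*m" by blast
  then have "(\<Sum>i<(j+1) div 2. if j = 2*i+1 then 1 else 2) = (\<Sum>i<m. 2 :: complex)"
    by (intro sum.cong) auto
  also have "\<dots> = of_nat j"
    using j by simp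
  finally show ?thesis .
next
  case False
  then obtain m where j: "j = 2*m+1" using oddE by blast
  then have "(\<Sum>i<(j+1) div 2. if j = 2*i+1 then 1 else 2) =
             (\<Sum>i<m. if i = m then 1 else 2) + (1 :: complex)"
    by simp
  also have "(\<Sum>i<m. if i = m then 1 else 2) = (\<Sum>i<m. 2 :: complex)"
    by (intro sum.cong) auto
  also have "\<dots> + 1 = of_nat j"
    using j by simp
  finally show ?thesis .
qed

lemma shift_coeff_minus_2: "shift_coeff (-2) j = (if j = 0 then 1 else 2)"
proof -
  have "shift_coeff (-2) j = (\<lambda>j. if j = 0 then 1 else 2) j"
    unfolding shift_coeff_def
  proof (rule hpoly_unique)
    fix j :: nat assume "0 < j"
    have "(\<Sum>i<(j+1) div 2. of_nat (2*i+1) * (- (-2) / of_nat (2*i+1)) *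
             (if j - (2*i+1) = 0 then 1 else 2 :: complex)) =
          (\<Sum>i<(j+1) div 2. 2 * (if j = 2*i+1 then 1 else 2))"
      by (rule sum.cong) (auto simp del: of_nat_Suc)
    also have "\<dots> = of_nat j * 2"
      unfolding sum_distrib_left[symmetric] sum_odd_step_weights by simp
    finally show "of_nat j * (if j = 0 then 1 else 2) = (\<Sum>i<(j+1) div 2.
        of_nat (2*i+1) * (- (-2) / of_nat (2*i+1)) * (if j - (2*i+1) = 0 then 1 else 2 :: complex))"
      using \<open>0 < j\<close> by simp
  qed simp
  then show ?thesis by simp
qed

lemma shift_coeff_2: "shift_coeff 2 j = (if j = 0 then 1 else 2 * (-1)^j)"
proof -
  have "shift_coeff 2 j = hpoly (\<lambda>l. - (- (-2) / of_nat (2*l+1))) j"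
    unfolding shift_coeff_def by simp
  also have "\<dots> = (-1)^j * shift_coeff (-2) j"
    unfolding shift_coeff_def by (rule hpoly_uminus)
  finally show ?thesis by (simp add: shift_coeff_minus_2)
qed

section \<open>The polynomials \<open>h\<^sub>k(t\<^sup>(\<^sup>a\<^sup>) - t'\<^sup>(\<^sup>a\<^sup>))\<close>\<close>

text \<open>\<^const>\<open>tc\<close> and \<^const>\<open>upd\<close> address the first time sequence for the index 1 and the
  second one for every other index.\<close>

definition same_component :: "nat \<Rightarrow> nat \<Rightarrow> bool" where
  "same_component c a \<longleftrightarrow> (c = 1 \<longleftrightarrow> a = 1)"

lemma same_component_refl [simp]: "same_component a a"
  by (simp add: same_component_def)

lemma tc_upd: "tc a (upd c l s t') i = (if same_component c a \<and> i = l then s else tc a t' i)"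
  by (auto simp: tc_def upd_def same_component_def)

lemma pd_same_component: "same_component a c \<Longrightarrow> pd a = pd c"
  by (auto simp: same_component_def pd_def upd_def tc_def fun_eq_iff)

lemma shiftc_same_component:
  assumes "same_component a c"
  shows "shiftc a = shiftc c"
proof (intro ext)
  fix \<kappa> j f t
  have "shiftc c \<kappa> j f = (\<lambda>j. shiftc a \<kappa> j f) j"
    by (rule shiftc_unique) (simp_all add: shiftc_rec pd_same_component[OF assms, symmetric])
  then show "shiftc a \<kappa> j f t = shiftc c \<kappa> j f t" by simp
qed

definition hdiff :: "nat \<Rightarrow> tm \<Rightarrow> nat \<Rightarrow> fn" where
  "hdiff a t k = (\<lambda>t'. hpoly (\<lambda>l. tc a t l - tc a t' l) k)"

lemma hir_hdiff: "hir \<tau> c N t =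
    (\<lambda>t'. \<Sum>k\<le>N. \<Sum>i\<le>k. shiftc c (-2) i \<tau> t * shiftc c 2 (k - i) \<tau> t' * hdiff c t k t')"
  by (simp add: hir_def hdiff_def fun_eq_iff)

lemma hdiff_self: "hdiff a t k t = (if k = 0 then 1 else 0)"
  by (simp add: hdiff_def hpoly_zero)

lemma hdiff_upd_other: "\<not> same_component c a \<Longrightarrow> hdiff a t k (upd c l s t') = hdiff a t k t'"
  by (simp add: hdiff_def tc_upd)

lemma hdiff_upd_same:
  "same_component c a \<Longrightarrow>
   hdiff a t k (upd c l s t') = hpoly ((\<lambda>i. tc a t i - tc a t' i)(l := tc a t l - s)) k"
  by (auto simp: hdiff_def tc_upd fun_upd_def intro!: arg_cong[where f="\<lambda>y. hpoly y k"])

lemma has_field_derivative_hdiff: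
  assumes "same_component c a"
  shows "((\<lambda>s. hdiff a t k (upd c l s t')) has_field_derivative
           (if 2*l+1 \<le> k then - hdiff a t (k-(2*l+1)) (upd c l s0 t') else 0)) (at s0)"
proof -
  define y where "y = (\<lambda>i. tc a t i - tc a t' i)"
  have line: "hdiff a t k' (upd c l s t') = hpoly (y(l := tc a t l - s)) k'" for k' s
    using assms by (simp add: hdiff_upd_same y_def)
  have "((\<lambda>s. hpoly (y(l := tc a t l - s)) k) has_field_derivative
      (if 2*l+1 \<le> k then hpoly (y(l := tc a t l - s0)) (k-(2*l+1)) else 0) * -1) (at s0)"
    by (rule DERIV_chain2[OF hpoly_deriv]) (auto intro!: derivative_eq_intros)
  then show ?thesis
    unfolding line by (rule DERIV_cong) simp
qed

lemma partially_differentiable_hdiff: "partially_differentiable (hdiff a t k)"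
proof (rule partially_differentiableI)
  fix c l t' s0
  show "(\<lambda>s. hdiff a t k (upd c l s t')) field_differentiable at s0"
  proof (cases "same_component c a")
    case True
    then show ?thesis
      using has_field_derivative_hdiff field_differentiable_def by blast
  qed (simp add: hdiff_upd_other)
qed

lemma pd_hdiff:
  "pd c l (hdiff a t k) = (\<lambda>t'. if same_component c a \<and> 2*l+1 \<le> k then - hdiff a t (k-(2*l+1)) t' else 0)"
proof
  fix t'
  show "pd c l (hdiff a t k) t' = (if same_component c a \<and> 2*l+1 \<le> k then - hdiff a t (k-(2*l+1)) t' else 0)"
  proof (cases "same_component c a")
    case True
    then show ?thesis
      using DERIV_imp_deriv[OF has_field_derivative_hdiff[OF True]] by (simp add: pd_def upd_tc)
  qed (simp add: pd_def hdiff_upd_other)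
qed

lemma pds_hdiff: "\<exists>\<kappa> j. pds ds (hdiff a t k) = (\<lambda>t'. \<kappa> * hdiff a t j t')"
proof (induction ds)
  case Nil
  show ?case by (rule exI[of _ 1]) auto
next
  case (Cons x ds)
  then obtain \<kappa> j where IH: "pds ds (hdiff a t k) = (\<lambda>t'. \<kappa> * hdiff a t j t')" by blast
  obtain c l where x: "x = (c,l)" by (cases x)
  have "pds (x # ds) (hdiff a t k) =
        (\<lambda>t'. (if same_component c a \<and> 2*l+1 \<le> j then - \<kappa> else 0) * hdiff a t (j-(2*l+1)) t')"
    by (auto simp: x pds_Cons IH pd_cmult_at[OF partially_differentiable_hdiff] pd_hdiff fun_eq_iff)
  then show ?case by blast
qed

lemma smooth_hdiff: "smooth (hdiff a t k)"
  unfolding smooth_def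
proof
  fix ds
  obtain \<kappa> j where "pds ds (hdiff a t k) = (\<lambda>t'. \<kappa> * hdiff a t j t')"
    using pds_hdiff by blast
  then show "partially_differentiable (pds ds (hdiff a t k))"
    by (simp add: partially_differentiable_cmult partially_differentiable_hdiff)
qed

lemma shiftc_hdiff:
  "shiftc c \<kappa> j (hdiff a t k) =
     (if same_component c a then (\<lambda>t'. if j \<le> k then shift_coeff \<kappa> j * hdiff a t (k-j) t' else 0)
      else if j = 0 then hdiff a t k else (\<lambda>t'. 0))"
proof (cases "same_component c a")
  case True
  have "shiftc c \<kappa> j (hdiff a t k) = (\<lambda>j t'. if j \<le> k then shift_coeff \<kappa> j * hdiff a t (k-j) t' else 0) j"
  proof (rule shiftc_unique)
    fix j t' assume "0 < (j::nat)"
    have "(\<Sum>l<(j+1) div 2. \<kappa> * pd c l (\<lambda>t'. if j-(2*l+1) \<le> k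
              then shift_coeff \<kappa> (j-(2*l+1)) * hdiff a t (k-(j-(2*l+1))) t' else 0) t') =
          (\<Sum>l<(j+1) div 2. if j \<le> k then - \<kappa> * shift_coeff \<kappa> (j-(2*l+1)) * hdiff a t (k-j) t' else 0)"
    proof (intro sum.cong refl)
      fix l assume "l \<in> {..<(j+1) div 2}"
      then have l: "2*l+1 \<le> j" by auto
      then have "(j-(2*l+1) \<le> k \<and> 2*l+1 \<le> k-(j-(2*l+1))) = (j \<le> k)"
        and "k-(j-(2*l+1))-(2*l+1) = k - j" by auto
      then show "\<kappa> * pd c l (\<lambda>t'. if j-(2*l+1) \<le> k
              then shift_coeff \<kappa> (j-(2*l+1)) * hdiff a t (k-(j-(2*l+1))) t' else 0) t' =
          (if j \<le> k then - \<kappa> * shift_coeff \<kappa> (j-(2*l+1)) * hdiff a t (k-j) t' else 0)"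
        using True
        by (auto simp: pd_if_zero pd_cmult_at[OF partially_differentiable_hdiff] pd_hdiff)
    qed
    also have "\<dots> = (if j \<le> k then of_nat j * shift_coeff \<kappa> j * hdiff a t (k-j) t' else 0)"
      by (simp add: shift_coeff_rec sum_distrib_right)
    finally show "of_nat j * (if j \<le> k then shift_coeff \<kappa> j * hdiff a t (k-j) t' else 0) =
       (\<Sum>l<(j+1) div 2. \<kappa> * pd c l (\<lambda>t'. if j-(2*l+1) \<le> k
          then shift_coeff \<kappa> (j-(2*l+1)) * hdiff a t (k-(j-(2*l+1))) t' else 0) t')"
      by simp
  qed (simp add: shift_coeff_def)
  then show ?thesis using True by simp
next
  case False
  have "shiftc c \<kappa> j (hdiff a t k) = (\<lambda>j. if j = 0 then hdiff a t k else (\<lambda>t'. 0)) j"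
  proof (rule shiftc_unique)
    have "pd c l (if P then hdiff a t k else (\<lambda>t'. 0)) t' = 0" for P l t'
      using False by (auto simp: pd_hdiff pd_const)
    then show "of_nat j * (if j = 0 then hdiff a t k else (\<lambda>t'. 0)) t' =
      (\<Sum>l<(j+1) div 2. \<kappa> * pd c l (if j-(2*l+1) = 0 then hdiff a t k else (\<lambda>t'. 0)) t')" for j t'
      by simp
  qed simp
  then show ?thesis using False by simp
qed

section \<open>Hirota equations from the bilinear identity\<close>

definition bilinear_identity_under :: "fn \<Rightarrow> nat \<Rightarrow> (fn \<Rightarrow> fn) \<Rightarrow> bool" where
  "bilinear_identity_under \<tau> w \<Phi> \<longleftrightarrow> (\<forall>t. \<Phi> (hir \<tau> 1 w t) t = \<Phi> (hir \<tau> 2 w t) t)"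

lemma bkp2_tau_smooth_tau: "bkp2_tau \<tau> \<Longrightarrow> smooth_tau \<tau>"
  by (simp add: bkp2_tau_def)

lemma bkp2_tau_smooth: "bkp2_tau \<tau> \<Longrightarrow> smooth \<tau>"
  by (simp add: bkp2_tau_def smooth_tau_smooth)

lemma smooth_hir: "smooth \<tau> \<Longrightarrow> smooth (hir \<tau> c N t)"
  unfolding hir_hdiff by (intro smooth_sum smooth_mult smooth_cmult smooth_shiftc smooth_hdiff smooth_const) auto

lemma wt_snoc: "wt (ds @ [(c,l)]) = wt ds + (2*l+1)"
  by (simp add: wt_def)

lemma pds_shiftc_expand:
  assumes "smooth G" "0 < j"
  shows "pds ds (shiftc c \<kappa> j G) =
         (\<lambda>t. (1 / of_nat j) * (\<Sum>l<(j+1) div 2. \<kappa> * pds ds (pd c l (shiftc c \<kappa> (j - (2*l+1)) G)) t))"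
proof -
  have smooth_summand: "smooth (\<lambda>t. \<kappa> * pd c l (shiftc c \<kappa> (j - (2*l+1)) G) t)" for l
    by (intro smooth_cmult smooth_pd smooth_shiftc assms(1))
  show ?thesis
    unfolding shiftc_pos[OF assms(2)] pds_cmult[OF smooth_sum[OF finite_lessThan smooth_summand]]
      pds_sum[OF finite_lessThan smooth_summand] pds_cmult[OF smooth_pd[OF smooth_shiftc[OF assms(1)]]] ..
qed

text \<open>A shift operator is a combination of derivatives of total weight \<open>j\<close>, so it transports
  the bilinear identity truncated at weight \<open>w\<close> to the one truncated at \<open>w + j\<close>.\<close>

lemma bilinear_identity_under_shiftc:
  assumes "smooth \<tau>"
    and smooth_op: "\<And>c N t. smooth (op (hir \<tau> c N t))"
    and "\<And>ds. bilinear_identity_under \<tau> (wt ds + k) (\<lambda>g. pds ds (op g))"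
  shows "bilinear_identity_under \<tau> (wt ds + k + j) (\<lambda>g. pds ds (shiftc c \<kappa> j (op g)))"
proof (induction j arbitrary: ds rule: less_induct)
  case (less j)
  show ?case
  proof (cases "j = 0")
    case False
    then have "0 < j" by simp
    have IH: "pds ds (pd c l (shiftc c \<kappa> (j - (2*l+1)) (op (hir \<tau> 1 (wt ds + k + j) t)))) t =
              pds ds (pd c l (shiftc c \<kappa> (j - (2*l+1)) (op (hir \<tau> 2 (wt ds + k + j) t)))) t"
      if "l \<in> {..<(j+1) div 2}" for l t
    proof -
      have "wt (ds @ [(c,l)]) + k + (j - (2*l+1)) = wt ds + k + j"
        using that by (auto simp: wt_snoc)
      then show ?thesis
        using less.IH[of "j - (2*l+1)" "ds @ [(c,l)]"] that False
        unfolding bilinear_identity_under_def by (fastforce simp: pds_append pds_Cons)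
    qed
    show ?thesis
      unfolding bilinear_identity_under_def pds_shiftc_expand[OF smooth_op \<open>0 < j\<close>]
      using IH by simp
  qed (use assms(3) in simp)
qed

definition dshift :: "nat \<Rightarrow> nat \<Rightarrow> nat \<Rightarrow> nat \<Rightarrow> fn \<Rightarrow> fn" where
  "dshift a b p r g = pd a 0 (shiftc a (-2) p (shiftc b 2 r g))"

lemma bkp2_dshift:
  assumes "bkp2_tau \<tau>"
  shows "dshift a b p r (hir \<tau> 1 (1 + r + p) t) t = dshift a b p r (hir \<tau> 2 (1 + r + p) t) t"
proof -
  have \<tau>: "smooth \<tau>" by (rule bkp2_tau_smooth[OF assms])
  have "bilinear_identity_under \<tau> (wt ds + 0) (\<lambda>g. pds ds ((\<lambda>g. g) g))" for ds
    using assms by (simp add: bkp2_tau_def bilinear_identity_under_def)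
  then have "bilinear_identity_under \<tau> (wt ds + 0 + r) (\<lambda>g. pds ds (shiftc b 2 r ((\<lambda>g. g) g)))" for ds
    by (intro bilinear_identity_under_shiftc \<tau>) (simp add: smooth_hir \<tau>)
  then have "bilinear_identity_under \<tau> (wt ds + r + p) (\<lambda>g. pds ds (shiftc a (-2) p ((\<lambda>g. shiftc b 2 r g) g)))"
    for ds
    by (intro bilinear_identity_under_shiftc \<tau>) (simp_all add: smooth_hir smooth_shiftc \<tau>)
  note shifted = this[of "[(a,0)]"]
  have "wt [(a,0)] + r + p = 1 + r + p"
    by (simp add: wt_def)
  moreover have "(\<lambda>g. pds [(a,0)] (shiftc a (-2) p ((\<lambda>g. shiftc b 2 r g) g))) = dshift a b p r"
    by (simp add: fun_eq_iff dshift_def pds_Cons)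
  ultimately show ?thesis
    using shifted unfolding bilinear_identity_under_def by metis
qed

lemma bkp2_dshift_sides:
  assumes "bkp2_tau \<tau>" "a \<in> {1,2}" "c \<in> {1,2}"
  shows "dshift a b p r (hir \<tau> a (1 + r + p) t) t = dshift a b p r (hir \<tau> c (1 + r + p) t) t"
  using bkp2_dshift[OF assms(1), of a b p r t] assms(2,3) by auto

lemma dshift_sum:
  assumes "finite I" "\<And>i. i \<in> I \<Longrightarrow> smooth (f i)"
  shows "dshift a b p r (\<lambda>t. \<Sum>i\<in>I. f i t) = (\<lambda>t. \<Sum>i\<in>I. dshift a b p r (f i) t)"
  unfolding dshift_def using assms by (simp add: shiftc_sum smooth_shiftc pd_sum)

lemma dshift_cmult: "smooth f \<Longrightarrow> dshift a b p r (\<lambda>t. k * f t) = (\<lambda>t. k * dshift a b p r f t)"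
  unfolding dshift_def by (simp add: shiftc_cmult smooth_shiftc pd_cmult)

lemma dshift_mult:
  assumes F: "smooth F" and G: "smooth G"
  shows "dshift a b p r (\<lambda>t. F t * G t) t =
    (\<Sum>r1\<le>r. \<Sum>p1\<le>p.
        pd a 0 (shiftc a (-2) p1 (shiftc b 2 r1 F)) t * shiftc a (-2) (p-p1) (shiftc b 2 (r-r1) G) t
      + shiftc a (-2) p1 (shiftc b 2 r1 F) t * pd a 0 (shiftc a (-2) (p-p1) (shiftc b 2 (r-r1) G)) t)"
proof -
  have "shiftc a (-2) p (shiftc b 2 r (\<lambda>t. F t * G t)) =
        (\<lambda>t. \<Sum>r1\<le>r. \<Sum>p1\<le>p.
           shiftc a (-2) p1 (shiftc b 2 r1 F) t * shiftc a (-2) (p-p1) (shiftc b 2 (r-r1) G) t)"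
    using F G
    by (simp add: shiftc_mult shiftc_sum smooth_mult smooth_shiftc)
  then show ?thesis
    unfolding dshift_def using F G
    by (simp add: pd_sum smooth_sum smooth_mult smooth_shiftc pd_mult)
qed

text \<open>The coefficient by which \<open>h\<^sub>p(-2\<partial>\<^sub>a) h\<^sub>r(2\<partial>\<^sub>b)\<close> multiplies \<open>h\<^sub>k\<^sub>-\<^sub>p\<^sub>-\<^sub>r(t\<^sup>(\<^sup>c\<^sup>) - t'\<^sup>(\<^sup>c\<^sup>))\<close>
  when applied to \<open>h\<^sub>k(t\<^sup>(\<^sup>c\<^sup>) - t'\<^sup>(\<^sup>c\<^sup>))\<close>.\<close>

definition hdiff_factor :: "nat \<Rightarrow> nat \<Rightarrow> nat \<Rightarrow> nat \<Rightarrow> nat \<Rightarrow> complex" where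
  "hdiff_factor a b c p r =
     (if same_component b c then shift_coeff 2 r else if r = 0 then 1 else 0) *
     (if same_component a c then shift_coeff (-2) p else if p = 0 then 1 else 0)"

lemma shiftc_shiftc_hdiff:
  "shiftc a (-2) p (shiftc b 2 r (hdiff c t k)) =
     (\<lambda>t'. (if p + r \<le> k then hdiff_factor a b c p r else 0) * hdiff c t (k-p-r) t')"
proof (cases "same_component b c")
  case True
  have "shiftc a (-2) p (shiftc b 2 r (hdiff c t k)) =
        shiftc a (-2) p (\<lambda>t'. (if r \<le> k then shift_coeff 2 r else 0) * hdiff c t (k-r) t')"
    using True by (simp add: shiftc_hdiff if_distrib cong: if_cong)
  also have "\<dots> = (\<lambda>t'. (if r \<le> k then shift_coeff 2 r else 0) * shiftc a (-2) p (hdiff c t (k-r)) t')"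
    by (rule shiftc_cmult[OF smooth_hdiff])
  finally show ?thesis
    using True by (auto simp: shiftc_hdiff hdiff_factor_def fun_eq_iff diff_diff_add add.commute)
next
  case False
  then show ?thesis
    by (cases "r = 0") (auto simp: shiftc_hdiff hdiff_factor_def fun_eq_iff shiftc_const)
qed

lemma dshift_mult_hdiff:
  assumes "smooth F"
  shows "dshift a b p r (\<lambda>t'. F t' * hdiff c t k t') t =
    (\<Sum>r1\<le>r. \<Sum>p1\<le>p. hdiff_factor a b c (p-p1) (r-r1) *
       ((if k = p-p1+(r-r1) then pd a 0 (shiftc a (-2) p1 (shiftc b 2 r1 F)) t else 0) -
        (if same_component a c \<and> k = p-p1+(r-r1)+1 then shiftc a (-2) p1 (shiftc b 2 r1 F) t else 0)))"
proof -
  have "shiftc a (-2) p2 (shiftc b 2 r2 (hdiff c t k)) t =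
        (if k = p2 + r2 then hdiff_factor a b c p2 r2 else 0)" for p2 r2
    by (auto simp: shiftc_shiftc_hdiff hdiff_self)
  moreover have "pd a 0 (shiftc a (-2) p2 (shiftc b 2 r2 (hdiff c t k))) t =
        (if same_component a c \<and> k = p2 + r2 + 1 then - hdiff_factor a b c p2 r2 else 0)" for p2 r2
    unfolding shiftc_shiftc_hdiff pd_cmult_at[OF partially_differentiable_hdiff]
    by (auto simp: pd_hdiff hdiff_self same_component_def)
  ultimately show ?thesis
    unfolding dshift_mult[OF assms smooth_hdiff] by (intro sum.cong refl) (auto simp: algebra_simps)
qed

text \<open>\<open>shift_convolution \<tau> a b c e k p r t\<close> is the coefficient of \<open>z\<^sup>-\<^sup>k\<close> in
  \<open>\<tau>(t - 2[z\<^sup>-\<^sup>1]\<^sub>c) \<partial>\<^sub>a\<^sup>e h\<^sub>p(-2\<partial>\<^sub>a) h\<^sub>r(2\<partial>\<^sub>b) \<tau>(t + 2[z\<^sup>-\<^sup>1]\<^sub>c)\<close>.\<close>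

definition shift_convolution :: "fn \<Rightarrow> nat \<Rightarrow> nat \<Rightarrow> nat \<Rightarrow> nat \<Rightarrow> nat \<Rightarrow> nat \<Rightarrow> nat \<Rightarrow> tm \<Rightarrow> complex" where
  "shift_convolution \<tau> a b c e k p r t = (\<Sum>i\<le>k. shiftc c (-2) i \<tau> t *
      ((pd a 0 ^^ e) (shiftc a (-2) p (shiftc b 2 r (shiftc c 2 (k-i) \<tau>)))) t)"

lemma sum_swap_outer2:
  "(\<Sum>k\<in>K. \<Sum>i\<in>I k. \<Sum>x\<in>X. \<Sum>y\<in>Y. f k i x y) = (\<Sum>x\<in>X. \<Sum>y\<in>Y. \<Sum>k\<in>K. \<Sum>i\<in>I k. f k i x y)"
proof -
  have "(\<Sum>i\<in>I k. \<Sum>x\<in>X. \<Sum>y\<in>Y. f k i x y) = (\<Sum>x\<in>X. \<Sum>y\<in>Y. \<Sum>i\<in>I k. f k i x y)" for k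
    by (subst sum.swap) (simp only: sum.swap[of _ "I k"])
  then have "(\<Sum>k\<in>K. \<Sum>i\<in>I k. \<Sum>x\<in>X. \<Sum>y\<in>Y. f k i x y) =
             (\<Sum>k\<in>K. \<Sum>x\<in>X. \<Sum>y\<in>Y. \<Sum>i\<in>I k. f k i x y)"
    by simp
  also have "\<dots> = (\<Sum>x\<in>X. \<Sum>y\<in>Y. \<Sum>k\<in>K. \<Sum>i\<in>I k. f k i x y)"
    by (subst sum.swap) (simp only: sum.swap[of _ K])
  finally show ?thesis .
qed

lemma dshift_hir:
  assumes "smooth \<tau>"
  shows "dshift a b p r (hir \<tau> c (1 + r + p) t) t =
    (\<Sum>r1\<le>r. \<Sum>p1\<le>p. hdiff_factor a b c (p-p1) (r-r1) *
       (shift_convolution \<tau> a b c 1 (p-p1+(r-r1)) p1 r1 t -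
        (if same_component a c then shift_convolution \<tau> a b c 0 (p-p1+(r-r1)+1) p1 r1 t else 0)))"
proof -
  define N where "N = 1 + r + p"
  define A where "A i = shiftc c (-2) i \<tau> t" for i
  define B where "B j = shiftc c 2 j \<tau>" for j
  define P where "P e j p1 r1 = (pd a 0 ^^ e) (shiftc a (-2) p1 (shiftc b 2 r1 (B j))) t" for e j p1 r1
  define \<sigma> where "\<sigma> = (if same_component a c then 1 else 0 :: complex)"
  define \<delta> where "\<delta> e k p1 r1 = (if k = p-p1+(r-r1)+(1-e) then 1 else 0 :: complex)" for e k p1 r1
  have smooth_B: "smooth (B j)" for j
    unfolding B_def using assms by (rule smooth_shiftc)
  have "dshift a b p r (hir \<tau> c N t) t =
        dshift a b p r (\<lambda>t'. \<Sum>k\<le>N. \<Sum>i\<le>k. A i * (B (k - i) t' * hdiff c t k t')) t"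
    by (simp only: hir_hdiff A_def B_def mult.assoc)
  also have "\<dots> = (\<Sum>k\<le>N. \<Sum>i\<le>k. A i * dshift a b p r (\<lambda>t'. B (k - i) t' * hdiff c t k t') t)"
    by (simp add: dshift_sum dshift_cmult smooth_sum smooth_cmult smooth_mult smooth_B smooth_hdiff)
  also have "\<dots> = (\<Sum>k\<le>N. \<Sum>i\<le>k. \<Sum>r1\<le>r. \<Sum>p1\<le>p. hdiff_factor a b c (p-p1) (r-r1) *
       (\<delta> 1 k p1 r1 * (A i * P 1 (k-i) p1 r1) - \<sigma> * (\<delta> 0 k p1 r1 * (A i * P 0 (k-i) p1 r1))))"
    unfolding dshift_mult_hdiff[OF smooth_B] sum_distrib_left
    by (intro sum.cong refl) (simp add: P_def \<delta>_def \<sigma>_def algebra_simps)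
  also have "\<dots> = (\<Sum>r1\<le>r. \<Sum>p1\<le>p. hdiff_factor a b c (p-p1) (r-r1) *
       ((\<Sum>k\<le>N. \<delta> 1 k p1 r1 * (\<Sum>i\<le>k. A i * P 1 (k-i) p1 r1)) -
        \<sigma> * (\<Sum>k\<le>N. \<delta> 0 k p1 r1 * (\<Sum>i\<le>k. A i * P 0 (k-i) p1 r1))))"
    unfolding sum_swap_outer2
    by (simp add: sum_distrib_left sum_subtractf right_diff_distrib mult_ac)
  also have "\<dots> = (\<Sum>r1\<le>r. \<Sum>p1\<le>p. hdiff_factor a b c (p-p1) (r-r1) *
       (shift_convolution \<tau> a b c 1 (p-p1+(r-r1)) p1 r1 t -
        (if same_component a c then shift_convolution \<tau> a b c 0 (p-p1+(r-r1)+1) p1 r1 t else 0)))"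
    by (intro sum.cong refl)
       (auto simp: N_def \<delta>_def \<sigma>_def if_distrib[of "\<lambda>x. x * _"] shift_convolution_def A_def P_def B_def cong: if_cong)
  finally show ?thesis
    unfolding N_def .
qed

lemma sum_antidiagonal_reindex:
  fixes F :: "nat \<Rightarrow> nat \<Rightarrow> nat \<Rightarrow> 'a::comm_monoid_add"
  shows "(\<Sum>k\<le>p. \<Sum>i\<le>k. F i (k-i) (p-k)) = (\<Sum>i\<le>p. \<Sum>j\<le>p-i. F i j (p-i-j))"
  unfolding sum.Sigma[OF finite_atMost ballI[OF finite_atMost]]
  by (rule sum.reindex_bij_witness[where i="\<lambda>(i,j). (i+j, i)" and j="\<lambda>(k,i). (i, k-i)"]) auto

lemma sum_antidiagonal_collapse:
  fixes A :: "nat \<Rightarrow> 'a::semiring_0"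
  assumes "\<And>q. (\<Sum>j\<le>q. G j (q-j)) = (if q = 0 then g else 0)"
  shows "(\<Sum>k\<le>p. \<Sum>i\<le>k. A i * G (k-i) (p-k)) = A p * g"
proof -
  have "(\<Sum>k\<le>p. \<Sum>i\<le>k. A i * G (k-i) (p-k)) = (\<Sum>i\<le>p. A i * (if p - i = 0 then g else 0))"
    unfolding sum_antidiagonal_reindex[where F="\<lambda>i j k. A i * G j k"] sum_distrib_left[symmetric] assms ..
  also have "\<dots> = (\<Sum>i\<le>p. if i = p then A p * g else 0)"
    by (intro sum.cong) auto
  finally show ?thesis by simp
qed

lemma sum_shift_coeff_minus_2:
  "(\<Sum>k\<le>p. shift_coeff (-2) k * X k) = 2 * (\<Sum>k\<le>p. X k) - X 0"
proof -
  have "(\<Sum>k\<le>p. shift_coeff (-2) k * X k) = (\<Sum>k\<le>p. 2 * X k - (if k = 0 then X k else 0))"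
    by (intro sum.cong) (auto simp: shift_coeff_minus_2)
  then show ?thesis
    by (simp add: sum_subtractf sum_distrib_left)
qed

lemma sum_shift_coeff_2:
  "(\<Sum>k\<le>r. shift_coeff 2 k * X k) = 2 * (\<Sum>k\<le>r. (-1)^k * X k) - X 0"
proof -
  have "(\<Sum>k\<le>r. shift_coeff 2 k * X k) = (\<Sum>k\<le>r. 2 * ((-1)^k * X k) - (if k = 0 then X k else 0))"
    by (intro sum.cong) (auto simp: shift_coeff_2)
  then show ?thesis
    by (simp add: sum_subtractf sum_distrib_left)
qed

lemma shift_convolution_0 [simp]:
  "shift_convolution \<tau> a b c e 0 p r t = \<tau> t * (pd a 0 ^^ e) (shiftc a (-2) p (shiftc b 2 r \<tau>)) t"
  by (simp add: shift_convolution_def)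

context
  fixes \<tau> :: fn
  assumes \<tau>: "smooth_tau \<tau>"
begin

lemma shiftc_minus_2_tau: "shiftc b (-2) i \<tau> = (\<lambda>t. (-1)^i * shiftc b 2 i \<tau> t)"
  using shiftc_uminus[OF smooth_tau_smooth[OF \<tau>], of b 2 i] by simp

lemma smooth_shiftc_tau: "smooth (shiftc a c j (shiftc b d i \<tau>))"
  by (intro smooth_shiftc smooth_tau_smooth[OF \<tau>])

text \<open>The products \<open>\<tau>(t - 2[z\<^sup>-\<^sup>1]\<^sub>c) \<tau>(t + 2[z\<^sup>-\<^sup>1]\<^sub>c)\<close> cancel in the sums along antidiagonals.\<close>

lemma sum_shift_convolution_same_a:
  assumes "same_component a c"
  shows "(\<Sum>k\<le>p. shift_convolution \<tau> a b c e k (p-k) r t) =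
         shiftc a (-2) p \<tau> t * (pd a 0 ^^ e) (shiftc b 2 r \<tau>) t"
proof -
  define X where "X = shiftc b 2 r \<tau>"
  define G where "G j q = (pd a 0 ^^ e) (shiftc a (-2) q (shiftc a 2 j X)) t" for j q
  have X: "X \<in> pds_span \<tau>"
    unfolding X_def by (intro pds_span_shiftc[OF \<tau>] pds_span_self[OF \<tau>])
  have conv: "shift_convolution \<tau> a b c e k q r t = (\<Sum>i\<le>k. shiftc a (-2) i \<tau> t * G (k-i) q)" for k q
    unfolding shift_convolution_def G_def X_def shiftc_same_component[OF assms, symmetric]
    by (simp add: shiftc_commute[OF \<tau> pds_span_self[OF \<tau>], of b 2 r a 2])
  have inner: "(\<Sum>j\<le>q. G j (q-j)) = (if q = 0 then (pd a 0 ^^ e) X t else 0)" for q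
  proof -
    have cancel: "(\<lambda>t. \<Sum>i\<le>q. shiftc a (-2) i (shiftc a 2 (q-i) X) t) = (if q = 0 then X else (\<lambda>t. 0))"
      using shiftc_shiftc_uminus[OF \<tau> X, where s=q and c="-2"] by simp
    have "(\<Sum>j\<le>q. G j (q-j)) = (\<Sum>i\<le>q. G (q-i) i)"
      by (rule sum_atMost_convolution_rev[symmetric])
    also have "\<dots> = (pd a 0 ^^ e) (\<lambda>t. \<Sum>i\<le>q. shiftc a (-2) i (shiftc a 2 (q-i) X) t) t"
      unfolding G_def
      by (subst pd_power_sum) (auto intro: smooth_shiftc smooth_tau_smooth[OF \<tau>] simp: X_def)
    finally show ?thesis
      unfolding cancel by (simp add: pd_power_zero)
  qed
  show ?thesis
    unfolding conv sum_antidiagonal_collapse[OF inner] X_def ..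
qed

lemma sum_shift_convolution_same_b:
  assumes "same_component b c"
  shows "(\<Sum>k\<le>r. (-1)^k * shift_convolution \<tau> a b c e k p (r-k) t) =
         shiftc b 2 r \<tau> t * (pd a 0 ^^ e) (shiftc a (-2) p \<tau>) t"
proof -
  define G where "G j q = (pd a 0 ^^ e) (shiftc a (-2) p (shiftc b 2 q (shiftc b (-2) j \<tau>))) t" for j q
  have conv: "(-1)^k * shift_convolution \<tau> a b c e k p q t = (\<Sum>i\<le>k. shiftc b 2 i \<tau> t * G (k-i) q)" for k q
    unfolding shift_convolution_def shiftc_same_component[OF assms, symmetric] sum_distrib_left
  proof (intro sum.cong refl)
    fix i assume "i \<in> {..k}"
    then have sign: "(-1::complex)^k = (-1)^i * (-1)^(k-i)"
      by (simp flip: power_add)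
    have "G (k-i) q = (-1)^(k-i) * (pd a 0 ^^ e) (shiftc a (-2) p (shiftc b 2 q (shiftc b 2 (k-i) \<tau>))) t"
      by (simp add: G_def shiftc_minus_2_tau shiftc_cmult pd_power_cmult smooth_shiftc_tau smooth_shiftc
                    smooth_tau_smooth[OF \<tau>])
    then show "(-1)^k * (shiftc b (-2) i \<tau> t *
                 (pd a 0 ^^ e) (shiftc a (-2) p (shiftc b 2 q (shiftc b 2 (k-i) \<tau>))) t) =
               shiftc b 2 i \<tau> t * G (k-i) q"
      unfolding sign shiftc_minus_2_tau
      by (simp add: mult_ac)
  qed
  have inner: "(\<Sum>j\<le>q. G j (q-j)) = (if q = 0 then (pd a 0 ^^ e) (shiftc a (-2) p \<tau>) t else 0)" for q
  proof -
    have "(\<Sum>j\<le>q. G j (q-j)) = (\<Sum>i\<le>q. G (q-i) i)"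
      by (rule sum_atMost_convolution_rev[symmetric])
    also have "\<dots> = (pd a 0 ^^ e) (shiftc a (-2) p (\<lambda>t. \<Sum>i\<le>q. shiftc b 2 i (shiftc b (-2) (q-i) \<tau>) t)) t"
    proof -
      have pull: "shiftc a (-2) p (\<lambda>t. \<Sum>i\<le>q. shiftc b 2 i (shiftc b (-2) (q-i) \<tau>) t) =
            (\<lambda>t. \<Sum>i\<le>q. shiftc a (-2) p (shiftc b 2 i (shiftc b (-2) (q-i) \<tau>)) t)"
        by (rule shiftc_sum) (auto intro: smooth_shiftc_tau)
      show ?thesis
        unfolding G_def pull by (subst pd_power_sum) (auto intro: smooth_shiftc smooth_tau_smooth[OF \<tau>])
    qed
    finally show ?thesis
      using shiftc_shiftc_uminus[OF \<tau> pds_span_self[OF \<tau>], where s=q and a=b and c=2]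
      by (simp add: shiftc_const pd_power_zero)
  qed
  show ?thesis
    unfolding conv sum_antidiagonal_collapse[OF inner] ..
qed

lemma sum_shift_convolution_succ_a:
  assumes "same_component a c"
  shows "(\<Sum>k\<le>p. shift_convolution \<tau> a b c 0 (k+1) (p-k) r t) =
         shiftc a (-2) (p+1) \<tau> t * shiftc b 2 r \<tau> t - \<tau> t * shiftc a (-2) (p+1) (shiftc b 2 r \<tau>) t"
proof -
  have "(\<Sum>k\<le>Suc p. shift_convolution \<tau> a b c 0 k (Suc p - k) r t) =
        shift_convolution \<tau> a b c 0 0 (Suc p) r t + (\<Sum>k\<le>p. shift_convolution \<tau> a b c 0 (k+1) (p-k) r t)"
    by (simp del: sum.atMost_Suc add: sum.atMost_Suc_shift)
  then show ?thesis
    using sum_shift_convolution_same_a[OF assms, where p="Suc p" and e=0] by simp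
qed

lemma sum_shift_convolution_succ_b:
  assumes "same_component b c"
  shows "(\<Sum>k\<le>r. (-1)^k * shift_convolution \<tau> a b c 0 (k+1) p (r-k) t) =
         \<tau> t * shiftc a (-2) p (shiftc b 2 (r+1) \<tau>) t - shiftc b 2 (r+1) \<tau> t * shiftc a (-2) p \<tau> t"
proof -
  have "(\<Sum>k\<le>Suc r. (-1)^k * shift_convolution \<tau> a b c 0 k p (Suc r - k) t) =
        shift_convolution \<tau> a b c 0 0 p (Suc r) t - (\<Sum>k\<le>r. (-1)^k * shift_convolution \<tau> a b c 0 (k+1) p (r-k) t)"
    by (subst sum.atMost_Suc_shift) (simp add: sum_negf)
  then show ?thesis
    using sum_shift_convolution_same_b[OF assms, where r="Suc r" and e=0] by simp
qed

lemma shift_convolution_0_1: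
  assumes "same_component a c"
  shows "shift_convolution \<tau> a b c 0 1 p r t =
         2 * \<tau> t * pd a 0 (shiftc a (-2) p (shiftc b 2 r \<tau>)) t - 2 * pd a 0 \<tau> t * shiftc a (-2) p (shiftc b 2 r \<tau>) t"
proof -
  have "shiftc a (-2) p (shiftc b 2 r (\<lambda>t. 2 * pd a 0 \<tau> t)) =
        (\<lambda>t. 2 * pd a 0 (shiftc a (-2) p (shiftc b 2 r \<tau>)) t)"
    by (simp add: shiftc_cmult smooth_shiftc smooth_pd smooth_tau_smooth[OF \<tau>]
                  pd_shiftc_commute[OF \<tau>] pds_span_shiftc[OF \<tau>] pds_span_self[OF \<tau>])
  then show ?thesis
    unfolding shift_convolution_def shiftc_same_component[OF assms, symmetric]
    by (simp add: shiftc_1[unfolded One_nat_def] algebra_simps)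
qed

lemma dshift_hir_a:
  assumes "\<not> same_component b a"
  shows "dshift a b p r (hir \<tau> a (1 + r + p) t) t =
    2 * shiftc a (-2) p \<tau> t * pd a 0 (shiftc b 2 r \<tau>) t
    - 2 * (shiftc a (-2) (p+1) \<tau> t * shiftc b 2 r \<tau> t - \<tau> t * shiftc a (-2) (p+1) (shiftc b 2 r \<tau>) t)
    - (2 * pd a 0 \<tau> t * shiftc a (-2) p (shiftc b 2 r \<tau>) t - \<tau> t * pd a 0 (shiftc a (-2) p (shiftc b 2 r \<tau>)) t)"
proof -
  define Z where "Z e k q = shift_convolution \<tau> a b a e k q r t" for e k q
  have "hdiff_factor a b a p2 r2 = (if r2 = 0 then shift_coeff (-2) p2 else 0)" for p2 r2
    using assms by (simp add: hdiff_factor_def)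
  then have "dshift a b p r (hir \<tau> a (1 + r + p) t) t =
     (\<Sum>r1\<le>r. if r1 = r then \<Sum>p1\<le>p. shift_coeff (-2) (p-p1) * (Z 1 (p-p1) p1 - Z 0 (p-p1+1) p1) else 0)"
    unfolding dshift_hir[OF smooth_tau_smooth[OF \<tau>]] Z_def
    by (intro sum.cong refl) (auto intro!: sum.neutral)
  also have "\<dots> = (\<Sum>p1\<le>p. shift_coeff (-2) (p-p1) * (Z 1 (p-p1) p1 - Z 0 (p-p1+1) p1))"
    by simp
  also have "\<dots> = (\<Sum>k\<le>p. shift_coeff (-2) k * (Z 1 k (p-k) - Z 0 (k+1) (p-k)))"
    by (rule sum_atMost_convolution_rev[where f="\<lambda>x y. shift_coeff (-2) x * (Z 1 x y - Z 0 (x+1) y)"])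
  also have "\<dots> = 2 * ((\<Sum>k\<le>p. Z 1 k (p-k)) - (\<Sum>k\<le>p. Z 0 (k+1) (p-k))) - (Z 1 0 p - Z 0 1 p)"
    unfolding sum_shift_coeff_minus_2 by (simp add: sum_subtractf)
  finally show ?thesis
    unfolding Z_def sum_shift_convolution_same_a[OF same_component_refl]
      sum_shift_convolution_succ_a[OF same_component_refl] shift_convolution_0_1[OF same_component_refl]
    by (simp add: algebra_simps)
qed

lemma dshift_hir_b:
  assumes "\<not> same_component a b"
  shows "dshift a b p r (hir \<tau> b (1 + r + p) t) t =
    2 * shiftc b 2 r \<tau> t * pd a 0 (shiftc a (-2) p \<tau>) t - \<tau> t * pd a 0 (shiftc a (-2) p (shiftc b 2 r \<tau>)) t"
proof -
  define Z where "Z k q = shift_convolution \<tau> a b b 1 k p q t" for k q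
  have "hdiff_factor a b b p2 r2 = (if p2 = 0 then shift_coeff 2 r2 else 0)" for p2 r2
    using assms by (simp add: hdiff_factor_def)
  then have "dshift a b p r (hir \<tau> b (1 + r + p) t) t =
             (\<Sum>r1\<le>r. \<Sum>p1\<le>p. if p1 = p then shift_coeff 2 (r-r1) * Z (r-r1) r1 else 0)"
    unfolding dshift_hir[OF smooth_tau_smooth[OF \<tau>]] Z_def
    using assms by (intro sum.cong refl) auto
  also have "\<dots> = (\<Sum>r1\<le>r. shift_coeff 2 (r-r1) * Z (r-r1) r1)"
    by simp
  also have "\<dots> = (\<Sum>k\<le>r. shift_coeff 2 k * Z k (r-k))"
    by (rule sum_atMost_convolution_rev[where f="\<lambda>x y. shift_coeff 2 x * Z x y"])
  finally show ?thesis
    unfolding sum_shift_coeff_2 Z_def sum_shift_convolution_same_b[OF same_component_refl]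
    by (simp add: mult.assoc)
qed

end

lemma hirota_mixed:
  assumes "bkp2_tau \<tau>" "a \<in> {1,2}" "b \<in> {1,2}" "a \<noteq> b"
  shows "\<tau> t * shiftc a (-2) (p+1) (shiftc b 2 r \<tau>) t + \<tau> t * pd a 0 (shiftc a (-2) p (shiftc b 2 r \<tau>)) t
     - pd a 0 \<tau> t * shiftc a (-2) p (shiftc b 2 r \<tau>) t =
     shiftc b 2 r \<tau> t * pd a 0 (shiftc a (-2) p \<tau>) t - shiftc a (-2) p \<tau> t * pd a 0 (shiftc b 2 r \<tau>) t
     + shiftc a (-2) (p+1) \<tau> t * shiftc b 2 r \<tau> t"
proof -
  have \<tau>: "smooth_tau \<tau>" by (rule bkp2_tau_smooth_tau[OF assms(1)])
  have "\<not> same_component b a" "\<not> same_component a b"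
    using assms(2-4) by (auto simp: same_component_def)
  with bkp2_dshift_sides[OF assms(1-3), of b p r t] show ?thesis
    unfolding dshift_hir_a[OF \<tau> \<open>\<not> same_component b a\<close>] dshift_hir_b[OF \<tau> \<open>\<not> same_component a b\<close>]
    by algebra
qed

lemma sum_if_zero_const: "(\<Sum>y\<in>B. if P then f y else 0) = (if P then \<Sum>y\<in>B. f y else 0)"
  by simp

lemma sum_atMost_rev_2d:
  "(\<Sum>i\<le>p. \<Sum>j\<le>r. F (p-i) (r-j) i j) = (\<Sum>i\<le>(p::nat). \<Sum>j\<le>(r::nat). F i j (p-i) (r-j))"
proof -
  have "(\<Sum>j\<le>r. F (p-i) (r-j) i j) = (\<Sum>j\<le>r. F (p-i) j i (r-j))" for i
    by (rule sum_atMost_convolution_rev[where f="\<lambda>x y. F (p-i) x i y"])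
  then have "(\<Sum>i\<le>p. \<Sum>j\<le>r. F (p-i) (r-j) i j) = (\<Sum>i\<le>p. \<Sum>j\<le>r. F (p-i) j i (r-j))"
    by simp
  also have "\<dots> = (\<Sum>i\<le>p. \<Sum>j\<le>r. F i j (p-i) (r-j))"
    by (rule sum_atMost_convolution_rev[where f="\<lambda>x y. \<Sum>j\<le>r. F x j y (r-j)"])
  finally show ?thesis .
qed

definition hirota_sum :: "(nat \<Rightarrow> nat \<Rightarrow> nat \<Rightarrow> complex) \<Rightarrow> nat \<Rightarrow> nat \<Rightarrow> complex" where
  "hirota_sum W p r =
     (\<Sum>p2\<le>p. \<Sum>r2\<le>r. shift_coeff (-2) p2 * shift_coeff 2 r2 * W (p2+r2) (p-p2) (r-r2))"

definition alternating_sum :: "(nat \<Rightarrow> nat \<Rightarrow> nat \<Rightarrow> complex) \<Rightarrow> nat \<Rightarrow> nat \<Rightarrow> complex" where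
  "alternating_sum W p r = (\<Sum>p2\<le>p. \<Sum>r2\<le>r. (-1)^r2 * W (p2+r2) (p-p2) (r-r2))"

definition row_sum :: "(nat \<Rightarrow> nat \<Rightarrow> nat \<Rightarrow> complex) \<Rightarrow> nat \<Rightarrow> nat \<Rightarrow> complex" where
  "row_sum W p r = (\<Sum>j\<le>p. W j (p-j) r)"

definition column_sum :: "(nat \<Rightarrow> nat \<Rightarrow> nat \<Rightarrow> complex) \<Rightarrow> nat \<Rightarrow> nat \<Rightarrow> complex" where
  "column_sum W p r = (\<Sum>j\<le>r. (-1)^j * W j p (r-j))"

lemma alternating_sum_step:
  "alternating_sum W p (Suc r) + alternating_sum W (Suc p) r = row_sum W p (Suc r) + column_sum W (Suc p) r"
proof -
  have "alternating_sum W p (Suc r) =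
        row_sum W p (Suc r) + (\<Sum>p2\<le>p. \<Sum>r2\<le>r. - ((-1)^r2 * W (Suc (p2+r2)) (p-p2) (r-r2)))"
    unfolding alternating_sum_def row_sum_def
    by (simp del: sum.atMost_Suc add: sum.atMost_Suc_shift sum.distrib)
  moreover have "alternating_sum W (Suc p) r =
        column_sum W (Suc p) r + (\<Sum>p2\<le>p. \<Sum>r2\<le>r. (-1)^r2 * W (Suc (p2+r2)) (p-p2) (r-r2))"
    unfolding alternating_sum_def column_sum_def
    by (simp del: sum.atMost_Suc add: sum.atMost_Suc_shift)
  ultimately show ?thesis by (simp add: sum_negf)
qed

lemma hirota_sum_decomp:
  "hirota_sum W p r = 4 * alternating_sum W p r - 2 * row_sum W p r - 2 * column_sum W p r + W 0 p r"
proof -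
  have coeff: "shift_coeff (-2) p2 * shift_coeff 2 r2 =
      4 * (-1)^r2 - 2 * (if r2 = 0 then 1 else 0) - 2 * (if p2 = 0 then (-1)^r2 else 0)
      + (if p2 = 0 \<and> r2 = 0 then 1 else 0)" for p2 r2
    by (auto simp: shift_coeff_minus_2 shift_coeff_2)
  have "hirota_sum W p r = (\<Sum>p2\<le>p. \<Sum>r2\<le>r. 4 * ((-1)^r2 * W (p2+r2) (p-p2) (r-r2))
          - (if r2 = 0 then 2 * W p2 (p-p2) r else 0)
          - (if p2 = 0 then 2 * ((-1)^r2 * W r2 p (r-r2)) else 0)
          + (if p2 = 0 then if r2 = 0 then W 0 p r else 0 else 0))"
    unfolding hirota_sum_def coeff by (intro sum.cong refl) (auto simp: algebra_simps)
  also have "\<dots> = 4 * alternating_sum W p r - 2 * row_sum W p r - 2 * column_sum W p r + W 0 p r"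
    unfolding alternating_sum_def row_sum_def column_sum_def
    by (simp add: sum.distrib sum_subtractf sum_distrib_left sum_if_zero_const sum.delta')
  finally show ?thesis .
qed

text \<open>In the combination of \<open>(p, r + 1)\<close> and \<open>(p + 1, r)\<close>, and on the boundary, the alternating
  double sum drops out and the Hirota sum becomes computable.\<close>

lemma hirota_sum_step:
  "hirota_sum W p (Suc r) + hirota_sum W (Suc p) r =
     (2 * row_sum W p (Suc r) - 2 * column_sum W p (Suc r) + W 0 p (Suc r)) +
     (2 * column_sum W (Suc p) r - 2 * row_sum W (Suc p) r + W 0 (Suc p) r)"
  using alternating_sum_step[of W p r] unfolding hirota_sum_decomp by algebra

lemma hirota_sum_0_right: "hirota_sum W p 0 = 2 * row_sum W p 0 - 2 * column_sum W p 0 + W 0 p 0"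
  unfolding hirota_sum_decomp by (simp add: alternating_sum_def row_sum_def column_sum_def)

lemma hirota_sum_0_left: "hirota_sum W 0 r = 2 * column_sum W 0 r - 2 * row_sum W 0 r + W 0 0 r"
  unfolding hirota_sum_decomp by (simp add: alternating_sum_def row_sum_def column_sum_def)

definition hirota_weight :: "fn \<Rightarrow> nat \<Rightarrow> tm \<Rightarrow> nat \<Rightarrow> nat \<Rightarrow> nat \<Rightarrow> complex" where
  "hirota_weight \<tau> a t j p r = shift_convolution \<tau> a a a 1 j p r t - shift_convolution \<tau> a a a 0 (j+1) p r t"

context
  fixes \<tau> :: fn
  assumes \<tau>: "smooth_tau \<tau>"
begin

lemma dshift_hir_same:
  "dshift a a p r (hir \<tau> a (1 + r + p) t) t = hirota_sum (hirota_weight \<tau> a t) p r"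
proof -
  have "dshift a a p r (hir \<tau> a (1 + r + p) t) t = (\<Sum>p1\<le>p. \<Sum>r1\<le>r.
          shift_coeff (-2) (p-p1) * shift_coeff 2 (r-r1) * hirota_weight \<tau> a t (p-p1+(r-r1)) p1 r1)"
    unfolding dshift_hir[OF smooth_tau_smooth[OF \<tau>]] hirota_weight_def
    by (subst sum.swap) (simp add: hdiff_factor_def mult_ac)
  also have "\<dots> = hirota_sum (hirota_weight \<tau> a t) p r"
    unfolding hirota_sum_def
    by (rule sum_atMost_rev_2d[where F="\<lambda>p2 r2 p1 r1.
          shift_coeff (-2) p2 * shift_coeff 2 r2 * hirota_weight \<tau> a t (p2+r2) p1 r1"])
  finally show ?thesis .
qed

lemma dshift_hir_other:
  assumes "\<not> same_component a c"
  shows "dshift a a p r (hir \<tau> c (1 + r + p) t) t = \<tau> t * pd a 0 (shiftc a (-2) p (shiftc a 2 r \<tau>)) t"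
proof -
  have "hdiff_factor a a c p2 r2 = (if p2 = 0 \<and> r2 = 0 then 1 else 0)" for p2 r2
    using assms by (simp add: hdiff_factor_def same_component_def)
  then have "dshift a a p r (hir \<tau> c (1 + r + p) t) t =
      (\<Sum>r1\<le>r. \<Sum>p1\<le>p. if r1 = r then if p1 = p then shift_convolution \<tau> a a c 1 0 p r t else 0 else 0)"
    unfolding dshift_hir[OF smooth_tau_smooth[OF \<tau>]] using assms by (intro sum.cong refl) auto
  then show ?thesis
    by (simp add: sum_if_zero_const)
qed

lemma row_sum_hirota_weight:
  "row_sum (hirota_weight \<tau> a t) p r = shiftc a (-2) p \<tau> t * pd a 0 (shiftc a 2 r \<tau>) t
     - (shiftc a (-2) (p+1) \<tau> t * shiftc a 2 r \<tau> t - \<tau> t * shiftc a (-2) (p+1) (shiftc a 2 r \<tau>) t)"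
  using sum_shift_convolution_same_a[OF \<tau> same_component_refl, where b=a and e=1]
    sum_shift_convolution_succ_a[OF \<tau> same_component_refl, where b=a]
  by (simp add: row_sum_def hirota_weight_def sum_subtractf)

lemma column_sum_hirota_weight:
  "column_sum (hirota_weight \<tau> a t) p r = shiftc a 2 r \<tau> t * pd a 0 (shiftc a (-2) p \<tau>) t
     + (shiftc a 2 (r+1) \<tau> t * shiftc a (-2) p \<tau> t - \<tau> t * shiftc a (-2) p (shiftc a 2 (r+1) \<tau>) t)"
  using sum_shift_convolution_same_b[OF \<tau> same_component_refl, where a=a and b=a and e=1]
    sum_shift_convolution_succ_b[OF \<tau> same_component_refl, where a=a and b=a]
  by (simp add: column_sum_def hirota_weight_def sum_subtractf right_diff_distrib)

lemma hirota_weight_0: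
  "hirota_weight \<tau> a t 0 p r = 2 * pd a 0 \<tau> t * shiftc a (-2) p (shiftc a 2 r \<tau>) t
     - \<tau> t * pd a 0 (shiftc a (-2) p (shiftc a 2 r \<tau>)) t"
  using shift_convolution_0_1[OF \<tau> same_component_refl, where b=a]
  by (simp add: hirota_weight_def)

end

text \<open>The Hirota equations satisfied by \<open>N p r = h\<^sub>p(-2\<partial>\<^sub>a) h\<^sub>r(2\<partial>\<^sub>a) \<tau>\<close> and \<open>D p r = \<partial>\<^sub>a N p r\<close> at a
  fixed point; \<open>N 0 0 = \<tau>\<close>.\<close>

definition hirota_equations :: "(nat \<Rightarrow> nat \<Rightarrow> complex) \<Rightarrow> (nat \<Rightarrow> nat \<Rightarrow> complex) \<Rightarrow> bool" where
  "hirota_equations N D \<longleftrightarrow>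
     (\<forall>p r. (D 0 0 * N p (r+1) - N 0 0 * D p (r+1)) + (D 0 0 * N (p+1) r - N 0 0 * D (p+1) r)
        - (N 0 (r+1) * D p 0 - N p 0 * D 0 (r+1)) + (N 0 r * D (p+1) 0 - N (p+1) 0 * D 0 r)
        - (N p 0 * N 0 (r+2) - N 0 0 * N p (r+2)) + (N (p+2) 0 * N 0 r - N 0 0 * N (p+2) r) = 0) \<and>
     (\<forall>p. 2 * (D 0 0 * N p 0 - N 0 0 * D p 0) - N p 0 * N 0 1 + N 0 0 * N p 1 = 0) \<and>
     (\<forall>r. 2 * (D 0 0 * N 0 r - N 0 0 * D 0 r) + N 1 0 * N 0 r - N 0 0 * N 1 r = 0)"

lemma hirota_equationsD:
  assumes "hirota_equations N D"
  shows "(D 0 0 * N p (r+1) - N 0 0 * D p (r+1)) + (D 0 0 * N (p+1) r - N 0 0 * D (p+1) r)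
        - (N 0 (r+1) * D p 0 - N p 0 * D 0 (r+1)) + (N 0 r * D (p+1) 0 - N (p+1) 0 * D 0 r)
        - (N p 0 * N 0 (r+2) - N 0 0 * N p (r+2)) + (N (p+2) 0 * N 0 r - N 0 0 * N (p+2) r) = 0"
    and "2 * (D 0 0 * N p 0 - N 0 0 * D p 0) - N p 0 * N 0 1 + N 0 0 * N p 1 = 0"
    and "2 * (D 0 0 * N 0 r - N 0 0 * D 0 r) + N 1 0 * N 0 r - N 0 0 * N 1 r = 0"
  using assms unfolding hirota_equations_def by blast+

lemma hirota_equations_same:
  assumes "bkp2_tau \<tau>" "a \<in> {1,2}"
  shows "hirota_equations (\<lambda>p r. shiftc a (-2) p (shiftc a 2 r \<tau>) t)
                          (\<lambda>p r. pd a 0 (shiftc a (-2) p (shiftc a 2 r \<tau>)) t)"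
proof -
  have \<tau>: "smooth_tau \<tau>" by (rule bkp2_tau_smooth_tau[OF assms(1)])
  define N where "N p r = shiftc a (-2) p (shiftc a 2 r \<tau>) t" for p r
  define D where "D p r = pd a 0 (shiftc a (-2) p (shiftc a 2 r \<tau>)) t" for p r
  define W where "W = hirota_weight \<tau> a t"
  define c where "c = (if a = 1 then 2 else 1 :: nat)"
  have c: "c \<in> {1,2}" "\<not> same_component a c"
    using assms(2) by (auto simp: c_def same_component_def)
  have hirota: "hirota_sum W p r = N 0 0 * D p r" for p r
    using bkp2_dshift_sides[OF assms c(1), of a p r t]
    unfolding W_def dshift_hir_same[OF \<tau>] dshift_hir_other[OF \<tau> c(2)] by (simp add: N_def D_def)
  have row: "row_sum W p r = N p 0 * D 0 r - (N (p+1) 0 * N 0 r - N 0 0 * N (p+1) r)" for p r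
    unfolding W_def row_sum_hirota_weight[OF \<tau>] by (simp add: N_def D_def)
  have column: "column_sum W p r = N 0 r * D p 0 + (N 0 (r+1) * N p 0 - N 0 0 * N p (r+1))" for p r
    unfolding W_def column_sum_hirota_weight[OF \<tau>] by (simp add: N_def D_def)
  have diagonal: "W 0 p r = 2 * D 0 0 * N p r - N 0 0 * D p r" for p r
    unfolding W_def hirota_weight_0[OF \<tau>] by (simp add: N_def D_def)
  show ?thesis
    unfolding N_def[symmetric] D_def[symmetric] hirota_equations_def
  proof (intro conjI allI)
    fix p r
    show "(D 0 0 * N p (r+1) - N 0 0 * D p (r+1)) + (D 0 0 * N (p+1) r - N 0 0 * D (p+1) r)
        - (N 0 (r+1) * D p 0 - N p 0 * D 0 (r+1)) + (N 0 r * D (p+1) 0 - N (p+1) 0 * D 0 r)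
        - (N p 0 * N 0 (r+2) - N 0 0 * N p (r+2)) + (N (p+2) 0 * N 0 r - N 0 0 * N (p+2) r) = 0"
      using hirota_sum_step[of W p r] unfolding hirota row column diagonal
      by (simp add: numeral_2_eq_2) algebra
  next
    fix p
    show "2 * (D 0 0 * N p 0 - N 0 0 * D p 0) - N p 0 * N 0 1 + N 0 0 * N p 1 = 0"
      using hirota_sum_0_right[of W p] unfolding hirota row column diagonal by simp algebra
  next
    fix r
    show "2 * (D 0 0 * N 0 r - N 0 0 * D 0 r) + N 1 0 * N 0 r - N 0 0 * N 1 r = 0"
      using hirota_sum_0_left[of W r] unfolding hirota row column diagonal by simp algebra
  qed
qed

definition neg_part :: "(nat \<Rightarrow> complex) \<Rightarrow> int \<Rightarrow> complex" where
  "neg_part f m = (if m \<le> 0 then f (nat (- m)) else 0)"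

lemma neg_part_neg [simp]: "neg_part f (- int r) = f r"
  by (simp add: neg_part_def)

lemma neg_part_pos [simp]: "0 < m \<Longrightarrow> neg_part f m = 0"
  by (simp add: neg_part_def)

text \<open>\<open>eps_convolution G n m\<close> is the coefficient of \<open>\<mu>\<^sup>-\<^sup>n \<lambda>\<^sup>m\<close> in
  \<open>(\<mu> + \<lambda>)/(\<mu> - \<lambda>) \<Sum>\<^sub>p\<^sub>,\<^sub>r G p r \<mu>\<^sup>-\<^sup>p \<lambda>\<^sup>-\<^sup>r\<close>, expanded in \<open>\<lambda>/\<mu>\<close>.\<close>

definition eps_convolution :: "(nat \<Rightarrow> nat \<Rightarrow> complex) \<Rightarrow> nat \<Rightarrow> int \<Rightarrow> complex" where
  "eps_convolution G n m =
     (\<Sum>k\<le>n. if int k \<ge> m then (if k = 0 then 1 else 2) * G (n-k) (nat (int k - m)) else 0)"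

lemma eps_convolution_0: "eps_convolution G 0 m = neg_part (G 0) m"
  by (simp add: eps_convolution_def neg_part_def)

lemma eps_convolution_Suc:
  "eps_convolution G (Suc n) m - eps_convolution G n (m-1) = neg_part (G (Suc n)) m + neg_part (G n) (m-1)"
proof -
  have "eps_convolution G (Suc n) m = neg_part (G (Suc n)) m +
      (\<Sum>k\<le>n. if int k \<ge> m - 1 then 2 * G (n-k) (nat (int k - (m - 1))) else 0)"
    unfolding eps_convolution_def neg_part_def
    by (subst sum.atMost_Suc_shift) (auto simp: algebra_simps intro!: sum.cong)
  moreover have "(\<Sum>k\<le>n. if int k \<ge> m - 1 then 2 * G (n-k) (nat (int k - (m - 1))) else 0)
      - eps_convolution G n (m-1) = (\<Sum>k\<le>n. if k = 0 then neg_part (G n) (m-1) else 0)"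
    unfolding eps_convolution_def neg_part_def sum_subtractf[symmetric]
    by (rule sum.cong) auto
  ultimately show ?thesis by simp
qed

definition wave_product :: "(nat \<Rightarrow> nat \<Rightarrow> complex) \<Rightarrow> (nat \<Rightarrow> nat \<Rightarrow> complex) \<Rightarrow> nat \<Rightarrow> int \<Rightarrow> complex" where
  "wave_product N D n m = neg_part (N 0) m * N (Suc n) 0 + neg_part (N 0) m * D n 0
     - N n 0 * neg_part (D 0) m + neg_part (N 0) (m-1) * N n 0"

lemma int_nonpos_cases:
  fixes m :: int
  obtains r where "m = - int r" | "m = 1" | "m = 2" | "m > 2"
proof (cases "m \<le> 0")
  case True
  then obtain r where "m = - int r"
    by (metis minus_minus nonneg_int_cases neg_0_le_iff_le)
  then show ?thesis using that(1) by blast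
next
  case False
  then show ?thesis using that(2-4) by linarith
qed

lemma hirota_equations_increment:
  assumes "hirota_equations N D"
  shows "N 0 0 * ((neg_part (N (Suc (Suc n))) m + neg_part (N (Suc n)) (m-1))
                 + (neg_part (D (Suc n)) m + neg_part (D n) (m-1))
                 - (neg_part (N (Suc n)) (m-1) + neg_part (N n) (m-1-1)))
         - (neg_part (N (Suc n)) m + neg_part (N n) (m-1)) * D 0 0
       = wave_product N D (Suc n) m - wave_product N D n (m-1)"
proof (cases m rule: int_nonpos_cases)
  case (1 r)
  have shift: "- int r - 1 = - int (Suc r)" "- int (Suc r) - 1 = - int (Suc (Suc r))"
    by simp_all
  show ?thesis
    using hirota_equationsD(1)[OF assms, of n r]
    unfolding wave_product_def 1 shift neg_part_neg by (simp add: numeral_2_eq_2) algebra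
next
  case 2
  have shift: "(1::int) - 1 = - int 0" "- int 0 - 1 = - int 1"
    by simp_all
  show ?thesis
    using hirota_equationsD(2)[OF assms, of n]
    unfolding wave_product_def 2 shift neg_part_neg by simp algebra
qed (simp_all add: wave_product_def neg_part_def)

lemma hirota_equations_initial:
  assumes "hirota_equations N D"
  shows "N 0 0 * (eps_convolution N 1 m + eps_convolution D 0 m - eps_convolution N 0 (m-1))
         - eps_convolution N 0 m * D 0 0 = wave_product N D 0 m"
proof -
  have "eps_convolution N 1 m - eps_convolution N 0 (m-1) = neg_part (N 1) m + neg_part (N 0) (m-1)"
    using eps_convolution_Suc[of N 0 m] by simp
  then have "N 0 0 * (eps_convolution N 1 m + eps_convolution D 0 m - eps_convolution N 0 (m-1))
         - eps_convolution N 0 m * D 0 0 =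
         N 0 0 * (neg_part (N 1) m + neg_part (N 0) (m-1) + neg_part (D 0) m) - neg_part (N 0) m * D 0 0"
    by (simp add: eps_convolution_0 algebra_simps)
  also have "\<dots> = wave_product N D 0 m"
  proof (cases m rule: int_nonpos_cases)
    case (1 r)
    have shift: "- int r - 1 = - int (Suc r)"
      by simp
    show ?thesis
      using hirota_equationsD(3)[OF assms, of r]
      unfolding wave_product_def 1 shift neg_part_neg by simp algebra
  qed (simp_all add: wave_product_def neg_part_def)
  finally show ?thesis .
qed

lemma hirota_equations_telescope:
  assumes "hirota_equations N D"
  shows "N 0 0 * (eps_convolution N (Suc n) m + eps_convolution D n m - eps_convolution N n (m-1))
         - eps_convolution N n m * D 0 0 = wave_product N D n m"
proof (induction n arbitrary: m)
  case 0
  show ?case using hirota_equations_initial[OF assms] by simp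
next
  case (Suc n)
  have "N 0 0 * (eps_convolution N (Suc (Suc n)) m + eps_convolution D (Suc n) m
          - eps_convolution N (Suc n) (m-1)) - eps_convolution N (Suc n) m * D 0 0 =
        (N 0 0 * (eps_convolution N (Suc n) (m-1) + eps_convolution D n (m-1)
          - eps_convolution N n (m-1-1)) - eps_convolution N n (m-1) * D 0 0) +
        (N 0 0 * ((eps_convolution N (Suc (Suc n)) m - eps_convolution N (Suc n) (m-1))
          + (eps_convolution D (Suc n) m - eps_convolution D n (m-1))
          - (eps_convolution N (Suc n) (m-1) - eps_convolution N n (m-1-1)))
         - (eps_convolution N (Suc n) m - eps_convolution N n (m-1)) * D 0 0)"
    by (simp add: algebra_simps)
  also have "\<dots> = wave_product N D n (m-1) + (wave_product N D (Suc n) m - wave_product N D n (m-1))"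
    by (simp only: Suc.IH eps_convolution_Suc hirota_equations_increment[OF assms])
  also have "\<dots> = wave_product N D (Suc n) m"
    by simp
  finally show ?case .
qed

section \<open>The vertex operator coefficients\<close>

text \<open>Numerators of \<^const>\<open>Xab_coef\<close> and of \<^const>\<open>psi_neg\<close>: both are these functions divided by \<open>\<tau>\<close>.\<close>

definition vertex_numerator :: "fn \<Rightarrow> nat \<Rightarrow> nat \<Rightarrow> nat \<Rightarrow> int \<Rightarrow> fn" where
  "vertex_numerator \<tau> a b n m t = (\<Sum>k\<le>n. if int k \<ge> m then
      eps_coef a b k * shiftc a (-2) (n-k) (shiftc b 2 (nat (int k - m)) \<tau>) t else 0)"

definition wave_numerator :: "fn \<Rightarrow> nat \<Rightarrow> int \<Rightarrow> fn" where
  "wave_numerator \<tau> b m t = neg_part (\<lambda>j. shiftc b 2 j \<tau> t) m"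

lemma smooth_vertex_numerator: "smooth \<tau> \<Longrightarrow> smooth (vertex_numerator \<tau> a b n m)"
  unfolding vertex_numerator_def[abs_def]
  by (intro smooth_sum) (auto intro!: smooth_if_zero smooth_cmult smooth_shiftc)

lemma smooth_wave_numerator: "smooth \<tau> \<Longrightarrow> smooth (wave_numerator \<tau> b m)"
  unfolding wave_numerator_def[abs_def] neg_part_def by (intro smooth_if_zero smooth_shiftc)

lemma pd_vertex_numerator:
  assumes "smooth \<tau>"
  shows "pd a 0 (vertex_numerator \<tau> a b n m) t = (\<Sum>k\<le>n. if int k \<ge> m then
      eps_coef a b k * pd a 0 (shiftc a (-2) (n-k) (shiftc b 2 (nat (int k - m)) \<tau>)) t else 0)"
  unfolding vertex_numerator_def[abs_def] using assms
  by (subst pd_sum) (auto intro!: smooth_if_zero smooth_cmult smooth_shiftc sum.cong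
                          simp: pd_if_zero pd_cmult smooth_shiftc)

lemma pd_wave_numerator: "pd a 0 (wave_numerator \<tau> b m) t = neg_part (\<lambda>j. pd a 0 (shiftc b 2 j \<tau>) t) m"
  unfolding wave_numerator_def[abs_def] neg_part_def by (rule pd_if_zero)

lemma vertex_numerator_equation_same:
  assumes "bkp2_tau \<tau>" "a \<in> {1,2}"
  shows "\<tau> t * (vertex_numerator \<tau> a a (n+1) m t + pd a 0 (vertex_numerator \<tau> a a n m) t
            - vertex_numerator \<tau> a a n (m-1) t)
         - vertex_numerator \<tau> a a n m t * pd a 0 \<tau> t
       = wave_numerator \<tau> a m t * shiftc a (-2) (n+1) \<tau> t
         + wave_numerator \<tau> a m t * pd a 0 (shiftc a (-2) n \<tau>) t
         - shiftc a (-2) n \<tau> t * pd a 0 (wave_numerator \<tau> a m) t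
         + wave_numerator \<tau> a (m-1) t * shiftc a (-2) n \<tau> t"
proof -
  define N where "N = (\<lambda>p r. shiftc a (-2) p (shiftc a 2 r \<tau>) t)"
  define D where "D = (\<lambda>p r. pd a 0 (shiftc a (-2) p (shiftc a 2 r \<tau>)) t)"
  have "hirota_equations N D"
    unfolding N_def D_def by (rule hirota_equations_same[OF assms])
  note telescope = hirota_equations_telescope[OF this, of n m]
  have "vertex_numerator \<tau> a a n m t = eps_convolution N n m" for n m
    unfolding vertex_numerator_def eps_convolution_def N_def
    by (intro sum.cong refl) (auto simp: eps_coef_def)
  moreover have "pd a 0 (vertex_numerator \<tau> a a n m) t = eps_convolution D n m" for n m
    unfolding pd_vertex_numerator[OF bkp2_tau_smooth[OF assms(1)]] eps_convolution_def D_def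
    by (intro sum.cong refl) (auto simp: eps_coef_def)
  moreover have "wave_numerator \<tau> a m t = neg_part (N 0) m" for m
    by (simp add: wave_numerator_def N_def)
  moreover have "pd a 0 (wave_numerator \<tau> a m) t = neg_part (D 0) m"
    by (simp add: pd_wave_numerator D_def)
  moreover have "\<tau> t = N 0 0" "pd a 0 \<tau> t = D 0 0"
    "shiftc a (-2) p \<tau> t = N p 0" "pd a 0 (shiftc a (-2) p \<tau>) t = D p 0" for p
    by (simp_all add: N_def D_def)
  ultimately show ?thesis
    using telescope unfolding wave_product_def by (simp add: algebra_simps)
qed

lemma vertex_numerator_equation_mixed:
  assumes "bkp2_tau \<tau>" "a \<in> {1,2}" "b \<in> {1,2}" "a \<noteq> b"
  shows "\<tau> t * (vertex_numerator \<tau> a b (n+1) m t + pd a 0 (vertex_numerator \<tau> a b n m) t)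
         - vertex_numerator \<tau> a b n m t * pd a 0 \<tau> t
       = wave_numerator \<tau> b m t * shiftc a (-2) (n+1) \<tau> t
         + wave_numerator \<tau> b m t * pd a 0 (shiftc a (-2) n \<tau>) t
         - shiftc a (-2) n \<tau> t * pd a 0 (wave_numerator \<tau> b m) t"
proof -
  have eps: "eps_coef a b k = (if k = 0 then 1 else 0)" for k
    using assms(4) by (simp add: eps_coef_def)
  have "vertex_numerator \<tau> a b n m t = neg_part (\<lambda>r. shiftc a (-2) n (shiftc b 2 r \<tau>) t) m" for n
    unfolding vertex_numerator_def eps neg_part_def
    by (simp add: if_distrib[of "\<lambda>x. x * _"] sum.delta cong: if_cong)
  moreover have "pd a 0 (vertex_numerator \<tau> a b n m) t =
      neg_part (\<lambda>r. pd a 0 (shiftc a (-2) n (shiftc b 2 r \<tau>)) t) m" for n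
    unfolding pd_vertex_numerator[OF bkp2_tau_smooth[OF assms(1)]] eps neg_part_def
    by (simp add: if_distrib[of "\<lambda>x. x * _"] sum.delta cong: if_cong)
  ultimately show ?thesis
    using hirota_mixed[OF assms, of t n "nat (- m)"]
    by (cases "m \<le> 0") (simp_all add: neg_part_def wave_numerator_def pd_wave_numerator algebra_simps)
qed

text \<open>The derivative of the coefficients of \<open>X\<^sub>a\<^sub>b(\<lambda>,\<mu>)\<tau>\<close> in \<open>x\<^sub>a\<close>, cleared of denominators; the
  factor \<open>if a = b\<close> comes from differentiating \<open>e\<^sup>-\<^sup>\<xi>\<^sup>(\<^sup>t\<^sup>(\<^sup>b\<^sup>)\<^sup>,\<^sup>\<lambda>\<^sup>)\<close>.\<close>

lemma vertex_numerator_equation: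
  assumes "bkp2_tau \<tau>" "a \<in> {1,2}" "b \<in> {1,2}"
  shows "\<tau> t * (vertex_numerator \<tau> a b (n+1) m t + pd a 0 (vertex_numerator \<tau> a b n m) t
            - (if a = b then vertex_numerator \<tau> a b n (m-1) t else 0))
         - vertex_numerator \<tau> a b n m t * pd a 0 \<tau> t
       = wave_numerator \<tau> b m t * shiftc a (-2) (n+1) \<tau> t
         + wave_numerator \<tau> b m t * pd a 0 (shiftc a (-2) n \<tau>) t
         - shiftc a (-2) n \<tau> t * pd a 0 (wave_numerator \<tau> b m) t
         + (if a = b then wave_numerator \<tau> b (m-1) t * shiftc a (-2) n \<tau> t else 0)"
  using vertex_numerator_equation_same[OF assms(1,2)] vertex_numerator_equation_mixed[OF assms]
  by (cases "a = b") auto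

section \<open>Differentiation along a coordinate line\<close>

text \<open>Quotients by \<open>\<tau>\<close> are only differentiable where \<open>\<tau> \<noteq> 0\<close>, so the induction below runs over the
  open set of the line through \<open>t0\<close> in the direction \<open>x\<^sub>a\<close> on which \<open>\<tau>\<close> does not vanish.\<close>

definition nonzero_line :: "fn \<Rightarrow> nat \<Rightarrow> tm \<Rightarrow> complex set" where
  "nonzero_line \<tau> a t0 = {s. \<tau> (upd a 0 s t0) \<noteq> 0}"

definition holomorphic_along :: "fn \<Rightarrow> nat \<Rightarrow> tm \<Rightarrow> fn \<Rightarrow> bool" where
  "holomorphic_along \<tau> a t0 f \<longleftrightarrow> (\<lambda>s. f (upd a 0 s t0)) holomorphic_on nonzero_line \<tau> a t0"

lemma pd_upd: "pd a 0 f (upd a 0 s t0) = deriv (\<lambda>s. f (upd a 0 s t0)) s"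
  unfolding pd_def by (simp add: upd_upd_same tc_upd_same)

context
  fixes \<tau> :: fn and a :: nat and t0 :: tm
  assumes \<tau>: "smooth \<tau>"
begin

abbreviation (input) U where "U \<equiv> nonzero_line \<tau> a t0"

abbreviation (input) holo where "holo \<equiv> holomorphic_along \<tau> a t0"

lemma smooth_field_differentiable: "smooth f \<Longrightarrow> (\<lambda>s. f (upd a 0 s t0)) field_differentiable (at x)"
  by (rule partially_differentiable_at[OF smooth_partially_differentiable])

lemma open_nonzero_line: "open U"
proof -
  have "continuous_on UNIV (\<lambda>s. \<tau> (upd a 0 s t0))"
    by (intro holomorphic_on_imp_continuous_on)
       (auto simp: holomorphic_on_def intro: field_differentiable_at_within smooth_field_differentiable \<tau>)
  then show ?thesis
    unfolding nonzero_line_def by (intro open_Collect_neq) auto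
qed

lemma holomorphic_along_smooth: "smooth f \<Longrightarrow> holo f"
  unfolding holomorphic_along_def holomorphic_on_def
  using smooth_field_differentiable field_differentiable_at_within by blast

lemma holomorphic_along_diff: "holo f \<Longrightarrow> holo g \<Longrightarrow> holo (\<lambda>t. f t - g t)"
  unfolding holomorphic_along_def by (rule holomorphic_on_diff)

lemma holomorphic_along_mult: "holo f \<Longrightarrow> holo g \<Longrightarrow> holo (\<lambda>t. f t * g t)"
  unfolding holomorphic_along_def by (rule holomorphic_on_mult)

lemma holomorphic_along_cmult: "holo f \<Longrightarrow> holo (\<lambda>t. c * f t)"
  by (rule holomorphic_along_mult[OF holomorphic_along_smooth[OF smooth_const]])

lemma holomorphic_along_if_zero: "holo f \<Longrightarrow> holo (\<lambda>t. if P then f t else 0)"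
  by (cases P) (simp_all add: holomorphic_along_smooth smooth_const)

lemma holomorphic_along_sum:
  "finite I \<Longrightarrow> (\<And>i. i \<in> I \<Longrightarrow> holo (f i)) \<Longrightarrow> holo (\<lambda>t. \<Sum>i\<in>I. f i t)"
  unfolding holomorphic_along_def by (rule holomorphic_on_sum) auto

lemma holomorphic_along_divide:
  assumes "smooth f"
  shows "holo (\<lambda>t. f t / \<tau> t)"
  using holomorphic_along_smooth[OF assms] holomorphic_along_smooth[OF \<tau>]
  unfolding holomorphic_along_def by (intro holomorphic_on_divide) (auto simp: nonzero_line_def)

lemma holomorphic_along_pd: "holo f \<Longrightarrow> holo (pd a 0 f)"
  unfolding holomorphic_along_def pd_upd by (rule holomorphic_deriv[OF _ open_nonzero_line])

lemma holomorphic_along_dxl: "(\<And>m. holo (r m)) \<Longrightarrow> holo ((dxl a b ^^ k) r m)"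
  by (induction k arbitrary: m)
     (simp_all add: dxl_def holomorphic_along_diff holomorphic_along_pd holomorphic_along_if_zero)

lemma holomorphic_along_field_differentiable:
  "holo f \<Longrightarrow> s \<in> U \<Longrightarrow> (\<lambda>s. f (upd a 0 s t0)) field_differentiable (at s)"
  unfolding holomorphic_along_def using holomorphic_on_imp_differentiable_at open_nonzero_line by blast

context
  fixes s assumes s: "s \<in> U"
begin

lemma pd_along_add:
  "holo f \<Longrightarrow> holo g \<Longrightarrow> pd a 0 (\<lambda>t. f t + g t) (upd a 0 s t0) = pd a 0 f (upd a 0 s t0) + pd a 0 g (upd a 0 s t0)"
  unfolding pd_upd by (rule deriv_add) (auto intro: holomorphic_along_field_differentiable s)

lemma pd_along_diff:
  "holo f \<Longrightarrow> holo g \<Longrightarrow> pd a 0 (\<lambda>t. f t - g t) (upd a 0 s t0) = pd a 0 f (upd a 0 s t0) - pd a 0 g (upd a 0 s t0)"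
  unfolding pd_upd by (rule deriv_diff) (auto intro: holomorphic_along_field_differentiable s)

lemma pd_along_mult:
  "holo f \<Longrightarrow> holo g \<Longrightarrow> pd a 0 (\<lambda>t. f t * g t) (upd a 0 s t0) =
     pd a 0 f (upd a 0 s t0) * g (upd a 0 s t0) + f (upd a 0 s t0) * pd a 0 g (upd a 0 s t0)"
  unfolding pd_upd by (subst deriv_mult) (auto intro: holomorphic_along_field_differentiable s)

lemma pd_along_cmult: "holo f \<Longrightarrow> pd a 0 (\<lambda>t. c * f t) (upd a 0 s t0) = c * pd a 0 f (upd a 0 s t0)"
  unfolding pd_upd by (rule deriv_cmult) (auto intro: holomorphic_along_field_differentiable s)

lemma pd_along_sum:
  "finite I \<Longrightarrow> (\<And>i. i \<in> I \<Longrightarrow> holo (f i)) \<Longrightarrow>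
   pd a 0 (\<lambda>t. \<Sum>i\<in>I. f i t) (upd a 0 s t0) = (\<Sum>i\<in>I. pd a 0 (f i) (upd a 0 s t0))"
proof (induction I rule: finite_induct)
  case (insert x F)
  then show ?case by (simp add: pd_along_add holomorphic_along_sum)
qed (simp add: pd_const)

lemma pd_along_cong:
  assumes "\<And>s. s \<in> U \<Longrightarrow> f (upd a 0 s t0) = g (upd a 0 s t0)"
  shows "pd a 0 f (upd a 0 s t0) = pd a 0 g (upd a 0 s t0)"
  unfolding pd_upd
proof (rule deriv_cong_ev)
  show "\<forall>\<^sub>F x in nhds s. f (upd a 0 x t0) = g (upd a 0 x t0)"
    using eventually_nhds_in_open[OF open_nonzero_line s] by (rule eventually_mono) (use assms in auto)
qed simp

lemma pd_along_divide:
  assumes "smooth f"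
  shows "pd a 0 (\<lambda>t. f t / \<tau> t) (upd a 0 s t0) =
    (pd a 0 f (upd a 0 s t0) * \<tau> (upd a 0 s t0) - f (upd a 0 s t0) * pd a 0 \<tau> (upd a 0 s t0)) /
    (\<tau> (upd a 0 s t0) * \<tau> (upd a 0 s t0))"
proof -
  have "\<tau> (upd a 0 s t0) \<noteq> 0"
    using s by (simp add: nonzero_line_def)
  with smooth_field_differentiable[OF assms] smooth_field_differentiable[OF \<tau>] show ?thesis
    unfolding pd_upd DERIV_deriv_iff_field_differentiable[symmetric]
    by (intro DERIV_imp_deriv DERIV_divide) auto
qed

end

end

section \<open>The induction on the order in \<open>\<mu>\<^sup>-\<^sup>1\<close>\<close>

lemma Xab_coef_eq: "Xab_coef \<tau> a b n m = (\<lambda>t. vertex_numerator \<tau> a b n m t / \<tau> t)"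
  unfolding Xab_coef_def vertex_numerator_def by (auto simp: fun_eq_iff sum_divide_distrib intro!: sum.cong)

lemma psi_neg_eq:
  assumes "smooth \<tau>"
  shows "psi_neg \<tau> b m = (\<lambda>t. wave_numerator \<tau> b m t / \<tau> t)"
proof
  fix t
  have "(-1) ^ j * shiftc b (-2) j \<tau> t = shiftc b 2 j \<tau> t" for j
    using shiftc_uminus[OF assms, of b 2 j] by (simp flip: power_mult_distrib)
  then show "psi_neg \<tau> b m t = wave_numerator \<tau> b m t / \<tau> t"
    by (simp add: psi_neg_def wcoef_def wave_numerator_def neg_part_def)
qed

lemma wcoef_eq: "wcoef \<tau> a n = (\<lambda>t. shiftc a (-2) n \<tau> t / \<tau> t)"
  by (simp add: wcoef_def fun_eq_iff)

lemma inv_comp_0: "inv_comp a b P 0 m = (\<lambda>t. 0)"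
  by (simp add: inv_comp_def)

text \<open>Coefficientwise form of \<open>\<partial>\<^sub>a (\<partial>\<^sub>a\<^sup>-\<^sup>1 P) = P\<close>; for \<open>a = b\<close> the twist
  \<open>exp(-\<xi>(t\<^sup>(\<^sup>b\<^sup>), \<lambda>))\<close> of the coefficients contributes the shift in \<open>m\<close>.\<close>

lemma inv_comp_Suc:
  assumes "\<And>k i m. holomorphic_along \<tau> a t0 ((dxl a b ^^ k) (P i) m)" "smooth \<tau>"
    and s: "s \<in> nonzero_line \<tau> a t0"
  shows "inv_comp a b P (Suc n) m (upd a 0 s t0) = P n m (upd a 0 s t0)
           - pd a 0 (inv_comp a b P n m) (upd a 0 s t0)
           + (if a = b then 1 else 0) * inv_comp a b P n (m-1) (upd a 0 s t0)"
proof -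
  define x where "x = upd a 0 s t0"
  define D where "D k = (dxl a b ^^ k) (P (n - 1 - k))" for k
  have "inv_comp a b P (Suc n) m x =
        P n m x + (\<Sum>k<n. (-1)^(Suc k) * dxl a b (D k) m x)"
    by (simp add: inv_comp_def D_def sum.lessThan_Suc_shift del: sum.lessThan_Suc)
  also have "\<dots> = P n m x - (\<Sum>k<n. (-1)^k * pd a 0 (D k m) x)
                  + (if a = b then 1 else 0) * (\<Sum>k<n. (-1)^k * D k (m-1) x)"
    by (simp add: dxl_def sum_subtractf sum_negf sum_distrib_left algebra_simps)
  also have "(\<Sum>k<n. (-1)^k * pd a 0 (D k m) x) = pd a 0 (inv_comp a b P n m) x"
    unfolding inv_comp_def x_def D_def using assms
    by (simp add: pd_along_sum pd_along_cmult holomorphic_along_cmult)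
  finally show ?thesis
    by (simp add: inv_comp_def D_def x_def)
qed

lemma ring_divide_identity:
  fixes T dT N1 dN0 N0 Nm V U1 dU0 U0 dV Vm c :: complex
  assumes "T \<noteq> 0"
    and "T * (N1 + dN0 - c * Nm) - N0 * dT = V * U1 + V * dU0 - U0 * dV + c * (Vm * U0)"
  shows "N1 / T + (dN0 * T - N0 * dT) / (T * T) - c * (Nm / T) =
    (V / T) * (U1 / T) - ((dV * T - V * dT) / (T * T)) * (U0 / T)
    + (V / T) * ((dU0 * T - U0 * dT) / (T * T)) + c * ((Vm / T) * (U0 / T))"
proof -
  have "N1 / T + (dN0 * T - N0 * dT) / (T * T) - c * (Nm / T) = (T * (N1 + dN0 - c * Nm) - N0 * dT) / (T * T)"
    using assms(1) by (simp add: field_simps)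
  also have "\<dots> = (V * U1 + V * dU0 - U0 * dV + c * (Vm * U0)) / (T * T)"
    using assms(2) by simp
  also have "\<dots> = (V / T) * (U1 / T) - ((dV * T - V * dT) / (T * T)) * (U0 / T)
      + (V / T) * ((dU0 * T - U0 * dT) / (T * T)) + c * ((Vm / T) * (U0 / T))"
    using assms(1) by (simp add: field_simps)
  finally show ?thesis .
qed

context
  fixes \<tau> :: fn and a b :: nat and t0 :: tm
  assumes bkp: "bkp2_tau \<tau>" and a: "a \<in> {1,2}" and b: "b \<in> {1,2}"
begin

abbreviation (input) c where "c \<equiv> (if a = b then 1 else 0 :: complex)"

abbreviation (input) P where "P \<equiv> (\<lambda>i m t. dxl a b (psi_neg \<tau> b) m t * wcoef \<tau> a i t)"

lemma holomorphic_along_psi_neg: "holomorphic_along \<tau> a t0 (psi_neg \<tau> b m)"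
  unfolding psi_neg_eq[OF bkp2_tau_smooth[OF bkp]]
  by (intro holomorphic_along_divide bkp2_tau_smooth[OF bkp] smooth_wave_numerator)

lemma holomorphic_along_wcoef: "holomorphic_along \<tau> a t0 (wcoef \<tau> a n)"
  unfolding wcoef_eq by (intro holomorphic_along_divide bkp2_tau_smooth[OF bkp] smooth_shiftc)

lemma holomorphic_along_Xab_coef: "holomorphic_along \<tau> a t0 (Xab_coef \<tau> a b n m)"
  unfolding Xab_coef_eq by (intro holomorphic_along_divide bkp2_tau_smooth[OF bkp] smooth_vertex_numerator)

lemma holomorphic_along_P: "holomorphic_along \<tau> a t0 ((dxl a b ^^ k) (P i) m)"
proof -
  have "holomorphic_along \<tau> a t0 (dxl a b (psi_neg \<tau> b) m)" for m
    unfolding dxl_def using bkp2_tau_smooth[OF bkp]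
    by (intro holomorphic_along_diff holomorphic_along_pd holomorphic_along_if_zero holomorphic_along_psi_neg)
  then show ?thesis
    using bkp2_tau_smooth[OF bkp] by (intro holomorphic_along_dxl holomorphic_along_mult holomorphic_along_wcoef)
qed

lemma Xab_coef_rec:
  assumes s: "s \<in> nonzero_line \<tau> a t0"
  defines "x \<equiv> upd a 0 s t0"
  shows "Xab_coef \<tau> a b (n+1) m x + pd a 0 (Xab_coef \<tau> a b n m) x - c * Xab_coef \<tau> a b n (m-1) x
   = psi_neg \<tau> b m x * wcoef \<tau> a (n+1) x - pd a 0 (psi_neg \<tau> b m) x * wcoef \<tau> a n x
     + psi_neg \<tau> b m x * pd a 0 (wcoef \<tau> a n) x + c * (psi_neg \<tau> b (m-1) x * wcoef \<tau> a n x)"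
proof -
  have "\<tau> x \<noteq> 0"
    using s by (simp add: nonzero_line_def x_def)
  moreover have "\<tau> x * (vertex_numerator \<tau> a b (n+1) m x + pd a 0 (vertex_numerator \<tau> a b n m) x
         - c * vertex_numerator \<tau> a b n (m-1) x) - vertex_numerator \<tau> a b n m x * pd a 0 \<tau> x
       = wave_numerator \<tau> b m x * shiftc a (-2) (n+1) \<tau> x + wave_numerator \<tau> b m x * pd a 0 (shiftc a (-2) n \<tau>) x
         - shiftc a (-2) n \<tau> x * pd a 0 (wave_numerator \<tau> b m) x
         + c * (wave_numerator \<tau> b (m-1) x * shiftc a (-2) n \<tau> x)"
    using vertex_numerator_equation[OF bkp a b, of x n m] by (cases "a = b") simp_all
  ultimately show ?thesis
    unfolding Xab_coef_eq psi_neg_eq[OF bkp2_tau_smooth[OF bkp]] wcoef_eq x_def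
      pd_along_divide[OF bkp2_tau_smooth[OF bkp] s smooth_vertex_numerator[OF bkp2_tau_smooth[OF bkp]]]
      pd_along_divide[OF bkp2_tau_smooth[OF bkp] s smooth_wave_numerator[OF bkp2_tau_smooth[OF bkp]]]
      pd_along_divide[OF bkp2_tau_smooth[OF bkp] s smooth_shiftc[OF bkp2_tau_smooth[OF bkp]]]
    by (rule ring_divide_identity)
qed

lemma Xab_coef_along:
  "s \<in> nonzero_line \<tau> a t0 \<Longrightarrow>
   Xab_coef \<tau> a b n m (upd a 0 s t0) =
     psi_neg \<tau> b m (upd a 0 s t0) * wcoef \<tau> a n (upd a 0 s t0) - 2 * inv_comp a b P n m (upd a 0 s t0)"
proof (induction n arbitrary: m s)
  case 0
  have "vertex_numerator \<tau> a b 0 m = wave_numerator \<tau> b m"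
    by (simp add: vertex_numerator_def wave_numerator_def neg_part_def eps_coef_def fun_eq_iff)
  with 0 show ?case
    by (simp add: Xab_coef_eq psi_neg_eq[OF bkp2_tau_smooth[OF bkp]] wcoef_eq inv_comp_0 nonzero_line_def)
next
  case (Suc n)
  define x where "x = upd a 0 s t0"
  define q where "q m = psi_neg \<tau> b m" for m
  define w where "w n = wcoef \<tau> a n" for n
  define X where "X n m = Xab_coef \<tau> a b n m" for n m
  have holo: "holomorphic_along \<tau> a t0 (q m)" "holomorphic_along \<tau> a t0 (w n)"
    "holomorphic_along \<tau> a t0 (X n m)" for n m
    unfolding q_def w_def X_def
    by (rule holomorphic_along_psi_neg holomorphic_along_wcoef holomorphic_along_Xab_coef)+
  have IH: "inv_comp a b P n m' (upd a 0 s' t0) =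
            (q m' (upd a 0 s' t0) * w n (upd a 0 s' t0) - X n m' (upd a 0 s' t0)) / 2"
    if "s' \<in> nonzero_line \<tau> a t0" for m' s'
    using Suc.IH[OF that, of m'] by (simp add: q_def w_def X_def)
  have "pd a 0 (inv_comp a b P n m) x = pd a 0 (\<lambda>t. (1/2) * (q m t * w n t - X n m t)) x"
    unfolding x_def by (rule pd_along_cong[OF bkp2_tau_smooth[OF bkp] Suc.prems]) (simp add: IH)
  also have "\<dots> = (1/2) * pd a 0 (\<lambda>t. q m t * w n t - X n m t) x"
    unfolding x_def using bkp2_tau_smooth[OF bkp] Suc.prems holo
    by (intro pd_along_cmult holomorphic_along_diff holomorphic_along_mult)
  also have "pd a 0 (\<lambda>t. q m t * w n t - X n m t) x = pd a 0 (\<lambda>t. q m t * w n t) x - pd a 0 (X n m) x"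
    unfolding x_def using bkp2_tau_smooth[OF bkp] Suc.prems holo by (intro pd_along_diff holomorphic_along_mult)
  also have "pd a 0 (\<lambda>t. q m t * w n t) x = pd a 0 (q m) x * w n x + q m x * pd a 0 (w n) x"
    unfolding x_def using bkp2_tau_smooth[OF bkp] Suc.prems holo by (intro pd_along_mult)
  finally have pd_inv_comp: "pd a 0 (inv_comp a b P n m) x =
      (1/2) * (pd a 0 (q m) x * w n x + q m x * pd a 0 (w n) x - pd a 0 (X n m) x)" .
  have "inv_comp a b P (Suc n) m x = P n m x - pd a 0 (inv_comp a b P n m) x + c * inv_comp a b P n (m-1) x"
    unfolding x_def by (rule inv_comp_Suc[OF holomorphic_along_P bkp2_tau_smooth[OF bkp] Suc.prems])
  moreover have "P n m x = (pd a 0 (q m) x - c * q (m-1) x) * w n x"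
    by (simp add: dxl_def q_def w_def)
  moreover have "X (Suc n) m x + pd a 0 (X n m) x - c * X n (m-1) x =
      q m x * w (Suc n) x - pd a 0 (q m) x * w n x + q m x * pd a 0 (w n) x + c * (q (m-1) x * w n x)"
    using Xab_coef_rec[OF Suc.prems, of n m] by (simp add: x_def q_def w_def X_def)
  ultimately show ?case
    using pd_inv_comp IH[OF Suc.prems, of "m-1"]
    by (simp add: x_def q_def w_def X_def field_simps) algebra
qed

lemma Xab_coef_at:
  assumes "\<tau> t0 \<noteq> 0"
  shows "Xab_coef \<tau> a b n m t0 = psi_neg \<tau> b m t0 * wcoef \<tau> a n t0 - 2 * inv_comp a b P n m t0"
  using Xab_coef_along[of "tc a t0 0" n m] assms by (simp add: upd_tc nonzero_line_def)

end

theorem mainTheorem5: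
  fixes \<tau> :: fn
  assumes "bkp2_tau \<tau>"
  shows "\<forall>a \<in> {1,2}. \<forall>b \<in> {1,2}. \<forall>n m t. \<tau> t \<noteq> 0 \<longrightarrow>
           Xab_coef \<tau> a b n m t = (-1) ^ a * Omega_coef \<tau> a b (psi_neg \<tau> b) n m t"
proof (intro ballI allI impI)
  fix a b n :: nat and m :: int and t :: tm
  assume "a \<in> {1,2}" "b \<in> {1,2}" "\<tau> t \<noteq> 0"
  then have "Xab_coef \<tau> a b n m t = psi_neg \<tau> b m t * wcoef \<tau> a n t
      - 2 * inv_comp a b (\<lambda>i mm s. dxl a b (psi_neg \<tau> b) mm s * wcoef \<tau> a i s) n m t"
    by (rule Xab_coef_at[OF assms])
  moreover have "(-1::complex) ^ a * (-1) ^ a = 1"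
    by (simp flip: power_mult_distrib)
  ultimately show "Xab_coef \<tau> a b n m t = (-1) ^ a * Omega_coef \<tau> a b (psi_neg \<tau> b) n m t"
    unfolding Omega_coef_def mult.assoc[symmetric] by simp
qed

end
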